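(* Let $k>l>0$ be coprime integers and $\lambda=\lambda_{k,l}$. Then the horizontal maximal cylinders of $X_\lambda$ form a cylinder decomposition, and the Veech group of $X_\lambda$ contains the parabolic element $$\begin{pmatrix}1&k(1+\lambda)\\0&1\end{pmatrix}.$$ It is the derivative of an affine homeomorphism that acts as the $k$-th power of a Dehn twist on the bottom horizontal cylinder (height $1$, circumference $1+\lambda$), and as the $l$-th power of a Dehn twist on each other horizontal cylinder (height $\lambda^{n}$, circumference $\lambda^{n-1}+\lambda^n+\lambda^{n+1}$, for $n\ge1$).
   Context: Notation: for $\lambda>0$ put $s_{-1}=0$ and $s_n=\sum_{i=0}^{n}\lambda^i$ for $n\ge 0$. Let $L_\lambda$ be the infinite polygonal path with consecutive vertices $(0,0),(s_0,0)$ and then, for $n\ge1$, the two vertices $(s_n,s_{n-2})$ and $(s_n,s_{n-1})$. Let $U_\lambda$ be its reflection in the line $y=x$. The \emph{ladder surface} $X_\lambda$ is the translation surface obtained from the open region bounded by $L_\lambda$ and $U_\lambda$ by identifying, via translation, each edge of $L_\lambda$ with the edge of $U_\lambda$ that is parallel to it and of the same length. Vertices are not points of $X_\lambda$. For coprime integers $k>l>0$, $\lambda_{k,l}$ denotes the positive solution of $k(\lambda+1)=l(\lambda^{-1}+1+\lambda)$. A cylinder of circumference $w$ and height $h$ is an open subset isometric to $\mathbb{R}/w\mathbb{Z}\times(0,h)$. A cylinder decomposition is a family of pairwise disjoint maximal cylinders whose closures cover the surface. An affine homeomorphism is one that is locally of the form $z\mapsto Az+t$ in translation charts; the matrix $A$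 is its derivative. The Veech group is the image in $\mathrm{PSL}(2,\mathbb{R})$ of the derivatives of orientation-preserving affine homeomorphisms of $X_\lambda$. *)

theory Defs
  imports "HOL-Analysis.Analysis"
begin

definition ladder_lambda :: "int \<Rightarrow> int \<Rightarrow> real" where
  "ladder_lambda k l = (THE x. 0 < x \<and>
      real_of_int k * (x + 1) = real_of_int l * (inverse x + 1 + x))"

text \<open>s n = sum_{i=0}^n lm^i for n >= 0, and s (-1) = 0 as in the paper.
  The value s (-2) = 0 is only a notational convenience used below to write
  the first edges uniformly.\<close>
definition sseq :: "real \<Rightarrow> int \<Rightarrow> real" where
  "sseq lm n = (if n < 0 then 0 else (\<Sum>i\<le>nat n. lm ^ i))"

definition pt :: "real \<Rightarrow> real \<Rightarrow> real^2" where
  "pt x y = vector [x, y]"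

text \<open>The open region bounded by the staircase L (vertices (0,0),(s_0,0),
  (s_n,s_{n-2}),(s_n,s_{n-1})) and its mirror image U: a point (x,y) lies above L iff
  s_{n-1} <= x < s_n and y > s_{n-2} for some n, and below U symmetrically.\<close>
definition ladder_region :: "real \<Rightarrow> (real^2) set" where
  "ladder_region lm =
     {p. 0 < p$1 \<and> 0 < p$2 \<and>
         (\<exists>n::nat. sseq lm (int n - 1) \<le> p$1 \<and> p$1 < sseq lm (int n) \<and> sseq lm (int n - 2) < p$2) \<and>
         (\<exists>m::nat. sseq lm (int m - 1) \<le> p$2 \<and> p$2 < sseq lm (int m) \<and> sseq lm (int m - 2) < p$1)}"

text \<open>Horizontal edges of L (open segments, vertices removed): the edge of length lm^n,
  from (s_{n-1}, s_{n-2}) to (s_n, s_{n-2}) (for n = 0: from (0,0) to (1,0)).\<close>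
definition hedge :: "real \<Rightarrow> nat \<Rightarrow> (real^2) set" where
  "hedge lm n = {pt x (sseq lm (int n - 2)) | x. sseq lm (int n - 1) < x \<and> x < sseq lm (int n)}"

text \<open>Vertical edges of L, n >= 1: from (s_n, s_{n-2}) to (s_n, s_{n-1}), length lm^(n-1).\<close>
definition vedge :: "real \<Rightarrow> nat \<Rightarrow> (real^2) set" where
  "vedge lm n = {pt (sseq lm (int n)) y | y. sseq lm (int n - 2) < y \<and> y < sseq lm (int n - 1)}"

text \<open>Edge identifications: the horizontal L-edge of length lm^n is identified by
  translation with the horizontal U-edge of length lm^n (from (s_{n-1},s_{n+1}) to
  (s_n,s_{n+1})); the vertical L-edge of length lm^(n-1) (n >= 1) with the vertical
  U-edge of length lm^(n-1) (at x = s_{n-3}). glued lm p q: p on an edge of L is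
  identified with q on the corresponding edge of U.\<close>
definition glued :: "real \<Rightarrow> real^2 \<Rightarrow> real^2 \<Rightarrow> bool" where
  "glued lm p q \<longleftrightarrow>
     (\<exists>n::nat. p \<in> hedge lm n \<and> q = p + pt 0 (sseq lm (int n + 1) - sseq lm (int n - 2))) \<or>
     (\<exists>n::nat. 1 \<le> n \<and> p \<in> vedge lm n \<and> q = p + pt (sseq lm (int n - 3) - sseq lm (int n)) 0)"

text \<open>Points of X_lambda, each represented by a point of the region or of an (open)
  edge of L; a point on an edge of U is represented by its partner on L.\<close>
definition ladder_X :: "real \<Rightarrow> (real^2) set" where
  "ladder_X lm = ladder_region lm \<union> (\<Union>n. hedge lm n) \<union> (\<Union>n\<in>{1..}. vedge lm n)"

definition reps :: "real \<Rightarrow> real^2 \<Rightarrow> (real^2) set" where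
  "reps lm x = insert x {q. glued lm x q}"

text \<open>Quotient topology on X_lambda (open sets have open preimage in the glued domain).\<close>
definition ladder_open :: "real \<Rightarrow> (real^2) set \<Rightarrow> bool" where
  "ladder_open lm U \<longleftrightarrow> U \<subseteq> ladder_X lm \<and>
     (\<forall>x\<in>U. \<forall>d\<in>reps lm x. \<exists>e>0. \<forall>y\<in>ladder_X lm. \<forall>d'\<in>reps lm y. norm (d' - d) < e \<longrightarrow> y \<in> U)"

lemma istopology_ladder_open: "istopology (ladder_open lm)"
  unfolding istopology_def
proof (intro conjI allI impI)
  fix S T assume S: "ladder_open lm S" and T: "ladder_open lm T"
  show "ladder_open lm (S \<inter> T)"
    unfolding ladder_open_def
  proof (intro conjI ballI)
    show "S \<inter> T \<subseteq> ladder_X lm" using S unfolding ladder_open_def by blast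
  next
    fix x d assume x: "x \<in> S \<inter> T" and d: "d \<in> reps lm x"
    obtain e1 where e1: "e1 > 0" "\<forall>y\<in>ladder_X lm. \<forall>d'\<in>reps lm y. norm (d' - d) < e1 \<longrightarrow> y \<in> S"
      using S x d unfolding ladder_open_def by blast
    obtain e2 where e2: "e2 > 0" "\<forall>y\<in>ladder_X lm. \<forall>d'\<in>reps lm y. norm (d' - d) < e2 \<longrightarrow> y \<in> T"
      using T x d unfolding ladder_open_def by blast
    show "\<exists>e>0. \<forall>y\<in>ladder_X lm. \<forall>d'\<in>reps lm y. norm (d' - d) < e \<longrightarrow> y \<in> S \<inter> T"
      using e1 e2 by (intro exI[of _ "min e1 e2"]) auto
  qed
next
  fix K assume K: "\<forall>S\<in>K. ladder_open lm S"
  show "ladder_open lm (\<Union>K)"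
    unfolding ladder_open_def
  proof (intro conjI ballI)
    show "\<Union>K \<subseteq> ladder_X lm" using K unfolding ladder_open_def by blast
  next
    fix x d assume "x \<in> \<Union>K" and d: "d \<in> reps lm x"
    then obtain S where S: "S \<in> K" "x \<in> S" by blast
    then obtain e where "e > 0" "\<forall>y\<in>ladder_X lm. \<forall>d'\<in>reps lm y. norm (d' - d) < e \<longrightarrow> y \<in> S"
      using K d unfolding ladder_open_def by blast
    then show "\<exists>e>0. \<forall>y\<in>ladder_X lm. \<forall>d'\<in>reps lm y. norm (d' - d) < e \<longrightarrow> y \<in> \<Union>K"
      using S by blast
  qed
qed

definition ladder_top :: "real \<Rightarrow> (real^2) topology" where
  "ladder_top lm = topology (ladder_open lm)"

text \<open>f is locally of the form z |-> A z + t in the translation charts of X_lambda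
  (charts are given by the plane representatives of points).\<close>
definition locally_affine :: "real \<Rightarrow> real^2^2 \<Rightarrow> (real^2 \<Rightarrow> real^2) \<Rightarrow> bool" where
  "locally_affine lm A f \<longleftrightarrow>
     (\<forall>x\<in>ladder_X lm. \<forall>d\<in>reps lm x. \<exists>e>0. \<forall>y\<in>ladder_X lm. \<forall>d'\<in>reps lm y.
        norm (d' - d) < e \<longrightarrow>
        (\<exists>r\<in>reps lm (f x). \<exists>r'\<in>reps lm (f y). r' - r = A *v (d' - d)))"

definition affine_homeo :: "real \<Rightarrow> real^2^2 \<Rightarrow> (real^2 \<Rightarrow> real^2) \<Rightarrow> bool" where
  "affine_homeo lm A f \<longleftrightarrow>
     homeomorphic_map (ladder_top lm) (ladder_top lm) f \<and> locally_affine lm A f"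

text \<open>Veech group: derivatives of orientation-preserving affine homeomorphisms, taken in
  SL(2,R); an element of PSL(2,R) represented by A belongs to it iff A or -A does.\<close>
definition veech_group :: "real \<Rightarrow> (real^2^2) set" where
  "veech_group lm = {A. det A = 1 \<and> (\<exists>f. affine_homeo lm A f)}"

definition mat2 :: "real \<Rightarrow> real \<Rightarrow> real \<Rightarrow> real \<Rightarrow> real^2^2" where
  "mat2 a b c d = vector [vector [a, b], vector [c, d]]"

text \<open>phi parametrizes C as a horizontal cylinder of circumference w and height h:
  phi : R x (0,h) -> X_lambda is w-periodic in the first variable, injective modulo w,
  a translation in charts (hence an isometry of R/wZ x (0,h) onto C), with image C.\<close>
definition hcyl_param ::
  "real \<Rightarrow> (real \<Rightarrow> real \<Rightarrow> real^2) \<Rightarrow> real \<Rightarrow> real \<Rightarrow> (real^2) set \<Rightarrow> bool" where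
  "hcyl_param lm \<phi> w h C \<longleftrightarrow> 0 < w \<and> 0 < h \<and>
     C = {\<phi> t s | t s. 0 < s \<and> s < h} \<and>
     C \<subseteq> ladder_X lm \<and>
     (\<forall>t s. 0 < s \<and> s < h \<longrightarrow> \<phi> (t + w) s = \<phi> t s) \<and>
     (\<forall>t s t' s'. 0 < s \<and> s < h \<and> 0 < s' \<and> s' < h \<and> \<phi> t s = \<phi> t' s' \<longrightarrow>
         s = s' \<and> (\<exists>j::int. t' = t + real_of_int j * w)) \<and>
     (\<forall>t s. 0 < s \<and> s < h \<longrightarrow>
        (\<exists>e>0. \<forall>t' s'. 0 < s' \<and> s' < h \<and> norm (pt (t' - t) (s' - s)) < e \<longrightarrow>
           (\<exists>r\<in>reps lm (\<phi> t s). \<exists>r'\<in>reps lm (\<phi> t' s'). r' - r = pt (t' - t) (s' - s))))"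

definition is_hcyl :: "real \<Rightarrow> (real^2) set \<Rightarrow> bool" where
  "is_hcyl lm C \<longleftrightarrow> (\<exists>\<phi> w h. hcyl_param lm \<phi> w h C)"

definition max_hcyl :: "real \<Rightarrow> (real^2) set \<Rightarrow> bool" where
  "max_hcyl lm C \<longleftrightarrow> is_hcyl lm C \<and> (\<forall>C'. is_hcyl lm C' \<and> C \<subseteq> C' \<longrightarrow> C' = C)"

definition dehn_twist_power ::
  "real \<Rightarrow> (real^2 \<Rightarrow> real^2) \<Rightarrow> int \<Rightarrow> (real^2) set \<Rightarrow> real \<Rightarrow> real \<Rightarrow> bool" where
  "dehn_twist_power lm f m C w h \<longleftrightarrow>
     (\<exists>\<phi>. hcyl_param lm \<phi> w h C \<and>
        (\<forall>t s. 0 < s \<and> s < h \<longrightarrow> f (\<phi> t s) = \<phi> (t + real_of_int m * w * s / h) s))"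

definition hstrip :: "real \<Rightarrow> nat \<Rightarrow> (real^2) set" where
  "hstrip lm n = {p \<in> ladder_X lm. sseq lm (int n - 1) < p$2 \<and> p$2 < sseq lm (int n)}"

end

theory Submission
  imports Defs
begin

text \<open>Off the levels y = s_j every point of X_lambda lies in a horizontal strip s_{n-1} < y < s_n,
  which is a cylinder of height lambda^n whose vertical ends x = s_{n-2} and x = s_{n+1} are glued.
  A horizontal cylinder cannot meet a level y = s_j (there each point has only one abscissa), so
  the strips are exactly the maximal horizontal cylinders, and their closures cover X_lambda.
  Shearing every strip by slope c in its own chart gives an affine homeomorphism as soon as
  c times the modulus height/width of every strip is an integer m: it then acts on the strip as
  the m-th power of a Dehn twist and fixes the levels. For c = k (1 + lambda) this integer is k on
  the bottom strip and, by the defining equation of lambda_{k,l}, l on all the others.\<close>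


lemma pt_nth [simp]: "pt x y $ 1 = x" "pt x y $ 2 = y"
  by (simp_all add: pt_def)

lemma vec2_eqI: "(p::real^2) $ 1 = q $ 1 \<Longrightarrow> p $ 2 = q $ 2 \<Longrightarrow> p = q"
  by (simp add: vec_eq_iff forall_2)

lemma pt_diff [simp]: "pt a b - pt c d = pt (a - c) (b - d)"
  by (rule vec2_eqI) simp_all

lemma diff_eq_ptD: assumes "(p::real^2) - q = pt a b" shows "p$1 = q$1 + a" "p$2 = q$2 + b"
  using arg_cong[OF assms, of "\<lambda>v. v$1"] arg_cong[OF assms, of "\<lambda>v. v$2"] by simp_all

lemma pt_eta: "pt (p$1) (p$2) = p"
  by (rule vec2_eqI) simp_all

lemma norm_le_abs_nth_sum: "norm (p::real^2) \<le> \<bar>p$1\<bar> + \<bar>p$2\<bar>"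
  using norm_le_l1_cart[of p] by (simp add: sum_2)

lemma norm_pt_0_left: "norm (pt 0 b) = \<bar>b\<bar>"
  using norm_le_abs_nth_sum[of "pt 0 b"] component_le_norm_cart[of "pt 0 b" 2] by simp

lemma norm_pt_0_right: "norm (pt a 0) = \<bar>a\<bar>"
  using norm_le_abs_nth_sum[of "pt a 0"] component_le_norm_cart[of "pt a 0" 1] by simp

lemma mat2_mult: "mat2 a b c d *v v = pt (a * v$1 + b * v$2) (c * v$1 + d * v$2)"
  by (rule vec2_eqI) (simp_all add: mat2_def matrix_vector_mult_def sum_2)

lemma det_mat2: "det (mat2 a b c d) = a * d - b * c"
  by (simp add: det_2 mat2_def)

lemma shear_norm_le: "norm (mat2 1 c 0 1 *v v) \<le> (2 + \<bar>c\<bar>) * norm v"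
proof -
  have "norm (mat2 1 c 0 1 *v v) \<le> \<bar>v$1 + c * v$2\<bar> + \<bar>v$2\<bar>"
    using norm_le_abs_nth_sum[of "mat2 1 c 0 1 *v v"] by (simp add: mat2_mult)
  also have "\<dots> \<le> \<bar>v$1\<bar> + \<bar>c\<bar> * \<bar>v$2\<bar> + \<bar>v$2\<bar>"
    by (simp add: abs_mult abs_triangle_ineq[THEN order_trans])
  also have "\<dots> \<le> norm v + \<bar>c\<bar> * norm v + norm v"
    using component_le_norm_cart[of v 1] component_le_norm_cart[of v 2]
    by (intro add_mono mult_left_mono) auto
  finally show ?thesis by (simp add: algebra_simps)
qed

lemma abs_shear_nth1_le: "\<bar>(v::real^2)$1 + c * v$2\<bar> \<le> (2 + \<bar>c\<bar>) * norm v"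
  using shear_norm_le[of c v] component_le_norm_cart[of "mat2 1 c 0 1 *v v" 1]
  by (simp add: mat2_mult)

lemma sseq_neg: "j < 0 \<Longrightarrow> sseq lm j = 0"
  by (simp add: sseq_def)

lemma sseq_step:
  assumes "0 \<le> j" shows "sseq lm j = sseq lm (j - 1) + lm ^ nat j"
proof (cases "j = 0")
  case False
  then have "nat j = Suc (nat (j - 1))" using assms by simp
  then show ?thesis using assms False by (simp add: sseq_def)
qed (simp add: sseq_def)

locale ladder = fixes lm :: real assumes lm_pos: "0 < lm"
begin

abbreviation S where "S \<equiv> sseq lm"

lemma sseq_mono: "i \<le> j \<Longrightarrow> S i \<le> S j"
proof (induction j rule: int_ge_induct)
  case (step j)
  have "S j \<le> S (j + 1)"
    using sseq_step[of "j + 1" lm] lm_pos by (cases "0 \<le> j + 1") (simp_all add: sseq_neg)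
  then show ?case using step by linarith
qed simp

lemma sseq_nonneg: "0 \<le> S j"
  using sseq_mono[of "-1" j] by (cases "j \<le> -1") (auto simp: sseq_neg)

lemma sseq_strict_mono: "-1 \<le> i \<Longrightarrow> i < j \<Longrightarrow> S i < S j"
  using sseq_mono[of i "j - 1"] sseq_step[of j lm] zero_less_power[OF lm_pos, of "nat j"] by simp

lemma sseq_inj: "-1 \<le> i \<Longrightarrow> -1 \<le> j \<Longrightarrow> S i = S j \<longleftrightarrow> i = j"
  by (metis sseq_strict_mono less_irrefl linorder_neqE)

lemma sseq_diff: "0 \<le> j \<Longrightarrow> S j - S (j - 1) = lm ^ nat j"
  using sseq_step[of j lm] by simp

end

section \<open>Horizontal strips\<close>

text \<open>Representatives modulo w are taken in (0, w] rather than [0, w): of the two glued vertical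
  ends of a strip, X_lambda contains the right one.\<close>
definition wrap :: "real \<Rightarrow> real \<Rightarrow> real" where
  "wrap w t = t - w * of_int \<lceil>t / w\<rceil> + w"

lemma wrap_bounds: assumes "0 < w" shows "0 < wrap w t" "wrap w t \<le> w"
proof -
  have "t \<le> w * of_int \<lceil>t / w\<rceil>"
    using assms mult_left_mono[of "t / w" "of_int \<lceil>t / w\<rceil>" w] by simp
  moreover have "of_int \<lceil>t / w\<rceil> < t / w + 1"
    by linarith
  then have "w * of_int \<lceil>t / w\<rceil> < t + w"
    using assms by (simp add: field_simps)
  ultimately show "0 < wrap w t" "wrap w t \<le> w" unfolding wrap_def by linarith+
qed

lemma wrap_congruent: "\<exists>j::int. wrap w t = t + of_int j * w"
  unfolding wrap_def by (rule exI[of _ "1 - \<lceil>t / w\<rceil>"]) (simp add: algebra_simps)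

lemma wrap_unique:
  assumes "0 < w" "0 < x" "x \<le> w" "x = t + of_int j * w"
  shows "wrap w t = x"
proof -
  have "t / w = x / w - of_int j" using assms by (simp add: field_simps)
  moreover have "0 < x / w" "x / w \<le> 1" using assms by (auto simp: field_simps)
  ultimately have "\<lceil>t / w\<rceil> = 1 - j" by (intro ceiling_unique) auto
  then have "w * of_int \<lceil>t / w\<rceil> = w - w * of_int j" by (simp add: right_diff_distrib)
  then show ?thesis using assms unfolding wrap_def by (simp add: algebra_simps)
qed

lemma wrap_add_multiple: assumes "0 < w" shows "wrap w (t + of_int m * w) = wrap w t"
proof -
  obtain j where j: "wrap w t = t + of_int j * w" using wrap_congruent by blast
  have "wrap w t = (t + of_int m * w) + of_int (j - m) * w" by (simp add: j algebra_simps)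
  then show ?thesis using wrap_unique[OF assms wrap_bounds[OF assms]] by metis
qed

lemma wrap_wrap_add: assumes "0 < w" shows "wrap w (wrap w t + u) = wrap w (t + u)"
proof -
  obtain j where "wrap w t = t + of_int j * w" using wrap_congruent by blast
  then show ?thesis using wrap_add_multiple[OF assms, of "t + u" j] by (simp add: algebra_simps)
qed

definition strip_width :: "real \<Rightarrow> nat \<Rightarrow> real" where
  "strip_width lm n = sseq lm (int n + 1) - sseq lm (int n - 2)"

definition strip_height :: "real \<Rightarrow> nat \<Rightarrow> real" where
  "strip_height lm n = sseq lm (int n) - sseq lm (int n - 1)"

text \<open>The n-th horizontal strip s_{n-1} < y < s_n runs from x = s_{n-2} to x = s_{n+1}, where its
  two vertical ends are glued; strip_chart n t s is its point at abscissa t (modulo the width,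
  measured from the left end) and height s above its bottom.\<close>
definition strip_chart :: "real \<Rightarrow> nat \<Rightarrow> real \<Rightarrow> real \<Rightarrow> real^2" where
  "strip_chart lm n t s =
     pt (sseq lm (int n - 2) + wrap (strip_width lm n) t) (sseq lm (int n - 1) + s)"

definition vertex_level :: "real \<Rightarrow> real \<Rightarrow> bool" where
  "vertex_level lm y \<longleftrightarrow> (\<exists>j::int. -1 \<le> j \<and> y = sseq lm j)"

abbreviation chart_offset :: "real \<Rightarrow> real^2 \<Rightarrow> real^2 \<Rightarrow> real^2 \<Rightarrow> bool" where
  "chart_offset lm p q v \<equiv> \<exists>r\<in>reps lm p. \<exists>r'\<in>reps lm q. r' - r = v"

lemma reps_self: "p \<in> reps lm p"
  unfolding reps_def by blast

lemma chart_offset_self: "q - p = v \<Longrightarrow> chart_offset lm p q v"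
  using reps_self by blast

lemma reps_cases: "z \<in> reps lm p \<Longrightarrow> z = p \<or> glued lm p z"
  unfolding reps_def by blast

lemma hstrip_iff:
  "p \<in> hstrip lm n \<longleftrightarrow> p \<in> ladder_X lm \<and> sseq lm (int n - 1) < p$2 \<and> p$2 < sseq lm (int n)"
  unfolding hstrip_def by simp

context ladder begin

lemma strip_width_pos: "0 < strip_width lm n"
  using sseq_mono[of "int n - 2" "int n - 1"] sseq_strict_mono[of "int n - 1" "int n + 1"]
  by (simp add: strip_width_def)

lemma strip_height_pos: "0 < strip_height lm n"
  using sseq_strict_mono[of "int n - 1" "int n"] by (simp add: strip_height_def)

lemma sseq_bracket:
  assumes "0 \<le> x" "x < S (int N)"
  obtains n :: nat where "n \<le> N" "S (int n - 1) \<le> x" "x < S (int n)"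
proof -
  define n where "n = (LEAST n::nat. x < S (int n))"
  have "x < S (int n)" unfolding n_def by (rule LeastI[of _ N]) (rule assms(2))
  moreover have "n \<le> N" unfolding n_def by (rule Least_le) (rule assms(2))
  moreover have "S (int n - 1) \<le> x"
  proof (cases n)
    case (Suc m)
    then have "\<not> x < S (int m)" using not_less_Least[of m "\<lambda>n. x < S (int n)"] n_def by simp
    then show ?thesis using Suc by simp
  qed (use assms in \<open>simp add: sseq_neg\<close>)
  ultimately show thesis using that by blast
qed

lemma sseq_strip_unique:
  assumes "-1 \<le> a" "-1 \<le> b" "S a < y" "y < S (a + 1)" "S b < y" "y < S (b + 1)"
  shows "a = b"
proof (rule ccontr)
  assume "a \<noteq> b"
  then have "S (a + 1) \<le> S b \<or> S (b + 1) \<le> S a"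
    by (cases "a < b") (auto intro: sseq_mono)
  then show False using assms by linarith
qed

lemma sseq_strip_width_pos: "S (int n - 2) < S (int n + 1)"
  using strip_width_pos by (simp add: strip_width_def)

lemma pt_in_region_strip:
  assumes "S (int n - 1) < y" "y < S (int n)" "S (int n - 2) < x" "x < S (int n + 1)"
  shows "pt x y \<in> ladder_region lm"
proof -
  have x0: "0 < x" using assms(3) sseq_nonneg[of "int n - 2"] by linarith
  have y0: "0 < y" using assms(1) sseq_nonneg[of "int n - 1"] by linarith
  obtain n' where n': "n' \<le> n + 1" "S (int n' - 1) \<le> x" "x < S (int n')"
    using sseq_bracket[of x "n + 1"] x0 assms(4) by (auto simp: add.commute)
  have "S (int n' - 2) \<le> S (int n - 1)" using n'(1) by (intro sseq_mono) simp
  then have "\<exists>n::nat. S (int n - 1) \<le> x \<and> x < S (int n) \<and> S (int n - 2) < y"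
    using n' assms(1) by (intro exI[of _ n']) auto
  moreover have "\<exists>m::nat. S (int m - 1) \<le> y \<and> y < S (int m) \<and> S (int m - 2) < x"
    using assms by (intro exI[of _ n]) auto
  ultimately show ?thesis unfolding ladder_region_def using x0 y0 by simp
qed

lemma region_cases:
  assumes "p \<in> ladder_region lm"
  obtains (strip) n :: nat
    where "S (int n - 1) < p$2" "p$2 < S (int n)" "S (int n - 2) < p$1" "p$1 < S (int n + 1)"
  | (level) n :: nat where "p$2 = S (int n)" "S (int n - 1) < p$1" "p$1 < S (int n + 1)"
proof -
  from assms obtain n m :: nat where
    n: "S (int n - 1) \<le> p$1" "p$1 < S (int n)" "S (int n - 2) < p$2" and
    m: "S (int m - 1) \<le> p$2" "p$2 < S (int m)" "S (int m - 2) < p$1" and "0 < p$2"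
    unfolding ladder_region_def by blast
  show thesis
  proof (cases "S (int m - 1) < p$2")
    case True
    have "\<not> int m \<le> int n - 2" using n(3) m(2) sseq_mono[of "int m" "int n - 2"] by linarith
    then have "int n - 2 < int m" by simp
    then have "S (int n) \<le> S (int m + 1)" by (intro sseq_mono) simp
    then show thesis using True m n strip by simp
  next
    case False
    then have eq: "p$2 = S (int m - 1)" using m(1) by simp
    then obtain j where j: "m = Suc j" using \<open>0 < p$2\<close> by (cases m) (auto simp: sseq_neg)
    have "\<not> int m - 1 \<le> int n - 2" using n(3) eq sseq_mono[of "int m - 1" "int n - 2"] by linarith
    then have "int n - 2 < int m - 1" by simp
    then have "S (int n) \<le> S (int m)" by (intro sseq_mono) simp
    then show thesis using eq m n j level[of j] by (simp add: add.commute)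
  qed
qed

lemma hedge_iff:
  "p \<in> hedge lm n \<longleftrightarrow> p$2 = S (int n - 2) \<and> S (int n - 1) < p$1 \<and> p$1 < S (int n)"
  unfolding hedge_def by (auto intro!: exI[of _ "p$1"]) (metis pt_eta)

lemma vedge_iff:
  "p \<in> vedge lm n \<longleftrightarrow> p$1 = S (int n) \<and> S (int n - 2) < p$2 \<and> p$2 < S (int n - 1)"
  unfolding vedge_def by (auto intro!: exI[of _ "p$2"]) (metis pt_eta)

lemma vertex_level_sseq: "vertex_level lm (S j)"
  unfolding vertex_level_def by (intro exI[of _ "max j (-1)"]) (auto simp: max_def sseq_neg)

lemma strip_not_vertex_level: "S (int n - 1) < y \<Longrightarrow> y < S (int n) \<Longrightarrow> \<not> vertex_level lm y"
proof
  assume y: "S (int n - 1) < y" "y < S (int n)" and "vertex_level lm y"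
  then obtain j where j: "-1 \<le> j" "y = S j" unfolding vertex_level_def by blast
  then have "\<not> j \<le> int n - 1" using y sseq_mono[of j "int n - 1"] by linarith
  then have "S (int n) \<le> S j" by (intro sseq_mono) simp
  then show False using y j by simp
qed

lemma vedge_0: "vedge lm 0 = {}"
  by (auto simp: vedge_iff sseq_neg)

lemma vedge_strip:
  "p \<in> vedge lm n \<Longrightarrow> n \<ge> 1 \<and> S (int (n - 1) - 1) < p$2 \<and> p$2 < S (int (n - 1))"
  using vedge_0 by (cases n) (auto simp: vedge_iff)

lemma hedge_vertex_level: "p \<in> hedge lm n \<Longrightarrow> vertex_level lm (p$2)"
  using vertex_level_sseq by (auto simp: hedge_iff)

lemma vedge_not_vertex_level: "p \<in> vedge lm n \<Longrightarrow> \<not> vertex_level lm (p$2)"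
  using vedge_strip strip_not_vertex_level by blast

lemma ladder_X_cases:
  "p \<in> ladder_X lm \<Longrightarrow> p \<in> ladder_region lm \<or> (\<exists>n. p \<in> hedge lm n) \<or> (\<exists>n. p \<in> vedge lm n)"
  unfolding ladder_X_def by blast

lemma ladder_X_vedgeI: "p \<in> vedge lm n \<Longrightarrow> p \<in> ladder_X lm"
  unfolding ladder_X_def using vedge_0 by (cases "n = 0") auto

lemma ladder_X_regionI: "p \<in> ladder_region lm \<Longrightarrow> p \<in> ladder_X lm"
  unfolding ladder_X_def by blast

lemma ladder_X_in_open_strip:
  assumes "p \<in> ladder_X lm" "\<not> vertex_level lm (p$2)"
  obtains n where "S (int n - 1) < p$2" "p$2 < S (int n)"
  using ladder_X_cases[OF assms(1)]
proof (elim disjE exE)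
  assume "p \<in> ladder_region lm"
  then show thesis by (cases rule: region_cases) (use that assms(2) vertex_level_sseq in auto)
qed (use hedge_vertex_level assms(2) vedge_strip that in blast)+

lemma glued_cases:
  assumes "glued lm p q"
  obtains n where "p \<in> hedge lm n" "q = p + pt 0 (S (int n + 1) - S (int n - 2))"
  | n where "1 \<le> n" "p \<in> vedge lm n" "q = p + pt (S (int n - 3) - S (int n)) 0"
  using assms unfolding glued_def by blast

lemma reps_vedge: "p \<in> vedge lm n \<Longrightarrow> p + pt (S (int n - 3) - S (int n)) 0 \<in> reps lm p"
  unfolding reps_def glued_def using vedge_strip by blast

lemma reps_nth2_eq: assumes "\<not> vertex_level lm (p$2)" "z \<in> reps lm p" shows "z$2 = p$2"
  using reps_cases[OF assms(2)]
proof
  assume "glued lm p z"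
  then show ?thesis by (cases rule: glued_cases) (use hedge_vertex_level assms(1) in auto)
qed simp

lemma reps_vertex_level:
  assumes "vertex_level lm (p$2)" "z \<in> reps lm p"
  shows "z$1 = p$1" "vertex_level lm (z$2)"
proof -
  have "z$1 = p$1 \<and> vertex_level lm (z$2)"
    using reps_cases[OF assms(2)]
  proof
    assume "glued lm p z"
    then show ?thesis
      by (cases rule: glued_cases) (use vertex_level_sseq vedge_not_vertex_level assms(1) in
          \<open>auto simp: hedge_iff\<close>)
  qed (use assms in simp)
  then show "z$1 = p$1" "vertex_level lm (z$2)" by auto
qed

lemma reps_vertex_level_iff: "z \<in> reps lm p \<Longrightarrow> vertex_level lm (z$2) \<longleftrightarrow> vertex_level lm (p$2)"
  using reps_nth2_eq reps_vertex_level by metis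

lemma strip_chart_nth:
  "strip_chart lm n t s $ 1 = S (int n - 2) + wrap (strip_width lm n) t"
  "strip_chart lm n t s $ 2 = S (int n - 1) + s"
  by (simp_all add: strip_chart_def)

lemma strip_chart_self:
  assumes "S (int n - 2) < x" "x \<le> S (int n + 1)"
  shows "strip_chart lm n (x - S (int n - 2)) (y - S (int n - 1)) = pt x y"
proof -
  have "wrap (strip_width lm n) (x - S (int n - 2)) = x - S (int n - 2)"
    using assms strip_width_pos by (intro wrap_unique[where j = 0]) (auto simp: strip_width_def)
  then show ?thesis by (simp add: strip_chart_def)
qed

lemma strip_chart_zero: "strip_chart lm n 0 s = pt (S (int n + 1)) (S (int n - 1) + s)"
proof -
  have "wrap (strip_width lm n) 0 = strip_width lm n"
    using strip_width_pos by (intro wrap_unique[where j = 1]) auto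
  then show ?thesis by (simp add: strip_chart_def strip_width_def)
qed

lemma strip_chart_shift:
  "strip_chart lm n (t + of_int m * strip_width lm n) s = strip_chart lm n t s"
  by (simp add: strip_chart_def wrap_add_multiple strip_width_pos)

lemma strip_chart_wrap_add:
  "strip_chart lm n (wrap (strip_width lm n) t + u) s = strip_chart lm n (t + u) s"
  by (simp add: strip_chart_def wrap_wrap_add strip_width_pos)

lemma ladder_X_strip_bounds:
  assumes y: "y \<in> ladder_X lm" and lev: "S (int n - 1) < y$2" "y$2 < S (int n)"
  shows "S (int n - 2) < y$1 \<and> y$1 \<le> S (int n + 1)"
  using ladder_X_cases[OF y]
proof (elim disjE exE)
  assume "y \<in> ladder_region lm"
  then show ?thesis
  proof (cases rule: region_cases)
    case (strip m)
    then have "int m - 1 = int n - 1"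
      using sseq_strip_unique[of "int m - 1" "int n - 1" "y$2"] lev by simp
    then show ?thesis using strip by simp
  qed (use lev strip_not_vertex_level vertex_level_sseq in metis)
next
  fix m assume "y \<in> hedge lm m"
  then show ?thesis using lev strip_not_vertex_level hedge_vertex_level by blast
next
  fix m assume m: "y \<in> vedge lm m"
  then have "int m - 2 = int n - 1"
    using sseq_strip_unique[of "int m - 2" "int n - 1" "y$2"] vedge_strip[OF m] lev
    by (simp add: vedge_iff)
  then show ?thesis using m sseq_strip_width_pos[of n] by (simp add: vedge_iff add.commute)
qed

lemma reps_in_strip:
  assumes y: "y \<in> ladder_X lm" and z: "z \<in> reps lm y"
    and lev: "S (int n - 1) < z$2" "z$2 < S (int n)"
  shows "S (int n - 2) \<le> z$1 \<and> z$1 \<le> S (int n + 1)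
    \<and> y = strip_chart lm n (z$1 - S (int n - 2)) (z$2 - S (int n - 1))"
  using reps_cases[OF z]
proof
  assume "z = y"
  then show ?thesis
    using ladder_X_strip_bounds[OF y] lev strip_chart_self[of n "y$1" "y$2"] by (force simp: pt_eta)
next
  assume "glued lm y z"
  then show ?thesis
  proof (cases rule: glued_cases)
    case (1 m)
    then have "z$2 = S (int m + 1)" by (simp add: hedge_iff)
    then show ?thesis using lev strip_not_vertex_level vertex_level_sseq by metis
  next
    case (2 m)
    then have "int m - 2 = int n - 1"
      using sseq_strip_unique[of "int m - 2" "int n - 1" "y$2"] lev by (simp add: vedge_iff)
    then have "z$1 = S (int n - 2)" "y = pt (S (int n + 1)) (z$2)"
      using 2 pt_eta[of y] by (simp_all add: vedge_iff add.commute)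
    then show ?thesis
      using sseq_strip_width_pos[of n] strip_chart_zero[of n "z$2 - S (int n - 1)"] by simp
  qed
qed

lemma strip_chart_in_hstrip:
  assumes "0 < s" "s < strip_height lm n"
  shows "strip_chart lm n t s \<in> hstrip lm n"
proof -
  let ?x = "S (int n - 2) + wrap (strip_width lm n) t"
  have r: "0 < wrap (strip_width lm n) t" "wrap (strip_width lm n) t \<le> strip_width lm n"
    using wrap_bounds strip_width_pos by auto
  have y: "S (int n - 1) < S (int n - 1) + s" "S (int n - 1) + s < S (int n)"
    using assms by (auto simp: strip_height_def)
  have "pt ?x (S (int n - 1) + s) \<in> ladder_X lm"
  proof (cases "wrap (strip_width lm n) t < strip_width lm n")
    case True
    then have "?x < S (int n + 1)" by (simp add: strip_width_def)
    then show ?thesis using pt_in_region_strip[OF y] r ladder_X_regionI by simp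
  next
    case False
    then have "?x = S (int (n + 1))" using r by (simp add: strip_width_def add.commute)
    then have "pt ?x (S (int n - 1) + s) \<in> vedge lm (n + 1)" using y by (simp add: vedge_iff)
    then show ?thesis by (rule ladder_X_vedgeI)
  qed
  then show ?thesis using y by (simp add: hstrip_iff strip_chart_def)
qed

lemma hstrip_eq_image: "hstrip lm n = {strip_chart lm n t s | t s. 0 < s \<and> s < strip_height lm n}"
proof
  show "hstrip lm n \<subseteq> {strip_chart lm n t s | t s. 0 < s \<and> s < strip_height lm n}"
  proof
    fix p assume "p \<in> hstrip lm n"
    then have p: "p \<in> ladder_X lm" "S (int n - 1) < p$2" "p$2 < S (int n)"
      by (auto simp: hstrip_iff)
    then have "p = strip_chart lm n (p$1 - S (int n - 2)) (p$2 - S (int n - 1))"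
      using reps_in_strip[OF _ reps_self] by blast
    moreover have "0 < p$2 - S (int n - 1)" "p$2 - S (int n - 1) < strip_height lm n"
      using p by (auto simp: strip_height_def)
    ultimately show "p \<in> {strip_chart lm n t s | t s. 0 < s \<and> s < strip_height lm n}" by blast
  qed
  show "{strip_chart lm n t s | t s. 0 < s \<and> s < strip_height lm n} \<subseteq> hstrip lm n"
    using strip_chart_in_hstrip by blast
qed

lemma strip_chart_reps_edge:
  assumes "0 < s" "s < strip_height lm n" "wrap (strip_width lm n) t = strip_width lm n"
  shows "strip_chart lm n t s - pt (strip_width lm n) 0 \<in> reps lm (strip_chart lm n t s)"
proof -
  have "strip_chart lm n t s \<in> vedge lm (n + 1)"
    using assms
    by (simp add: vedge_iff strip_chart_def strip_width_def strip_height_def add.commute)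
  moreover have "strip_chart lm n t s + pt (S (int (n + 1) - 3) - S (int (n + 1))) 0
      = strip_chart lm n t s - pt (strip_width lm n) 0"
    by (rule vec2_eqI) (simp_all add: strip_width_def add.commute)
  ultimately show ?thesis using reps_vedge by metis
qed

lemma strip_chart_local:
  assumes "0 < s" "s < strip_height lm n"
  obtains e where "e > 0" and "\<And>t' s'. 0 < s' \<Longrightarrow> s' < strip_height lm n \<Longrightarrow> \<bar>t' - t\<bar> < e \<Longrightarrow>
      chart_offset lm (strip_chart lm n t s) (strip_chart lm n t' s') (pt (t' - t) (s' - s))"
proof -
  let ?w = "strip_width lm n" let ?a = "wrap ?w t"
  have w: "0 < ?w" by (rule strip_width_pos)
  have a: "0 < ?a" "?a \<le> ?w" using wrap_bounds[OF w] by auto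
  obtain j where j: "?a = t + of_int j * ?w" using wrap_congruent by blast
  let ?offset = "\<lambda>t' s'. chart_offset lm (strip_chart lm n t s) (strip_chart lm n t' s')
    (pt (t' - t) (s' - s))"
  have offset: "?offset t' s'" if "wrap ?w t' = ?a + (t' - t)" for t' s'
    using that by (intro chart_offset_self) (simp add: strip_chart_def)
  show thesis
  proof (cases "?a < ?w")
    case True
    show thesis
    proof (rule that[of "min ?a (?w - ?a)"])
      fix t' s' assume "\<bar>t' - t\<bar> < min ?a (?w - ?a)"
      then have "wrap ?w t' = ?a + (t' - t)"
        using w by (intro wrap_unique[where j = j]) (auto simp: j)
      then show "?offset t' s'" by (rule offset)
    qed (use a True in simp)
  next
    case False
    then have aw: "?a = ?w" using a by simp
    show thesis
    proof (rule that[of ?w])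
      fix t' s' assume h: "\<bar>t' - t\<bar> < ?w"
      show "?offset t' s'"
      proof (cases "t' \<le> t")
        case True
        then have "wrap ?w t' = ?a + (t' - t)"
          using h w aw by (intro wrap_unique[where j = j]) (auto simp: j)
        then show ?thesis by (rule offset)
      next
        case False
        then have "wrap ?w t' = t' - t"
          using h w aw by (intro wrap_unique[where j = "j - 1"]) (auto simp: j algebra_simps)
        then have "strip_chart lm n t' s' - (strip_chart lm n t s - pt ?w 0) = pt (t' - t) (s' - s)"
          using aw by (simp add: strip_chart_def)
        then show ?thesis using reps_self strip_chart_reps_edge[OF assms aw] by blast
      qed
    qed (rule w)
  qed
qed

lemma strip_chart_inj:
  assumes "strip_chart lm n t s = strip_chart lm n t' s'"
  shows "s = s' \<and> (\<exists>j::int. t' = t + real_of_int j * strip_width lm n)"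
proof -
  have "wrap (strip_width lm n) t = wrap (strip_width lm n) t'" "s = s'"
    using arg_cong[OF assms, of "\<lambda>p. p$1"] arg_cong[OF assms, of "\<lambda>p. p$2"]
    by (simp_all add: strip_chart_nth)
  moreover obtain j j' where "wrap (strip_width lm n) t = t + of_int j * strip_width lm n"
      "wrap (strip_width lm n) t' = t' + of_int j' * strip_width lm n"
    using wrap_congruent by metis
  ultimately have "t' = t + of_int (j - j') * strip_width lm n" by (simp add: algebra_simps)
  then show ?thesis using \<open>s = s'\<close> by blast
qed

lemma hcyl_param_hstrip:
  "hcyl_param lm (strip_chart lm n) (strip_width lm n) (strip_height lm n) (hstrip lm n)"
  unfolding hcyl_param_def
proof (intro conjI allI impI)
  fix t s assume "0 < s \<and> s < strip_height lm n"
  then obtain e where "e > 0" and "\<And>t' s'. 0 < s' \<Longrightarrow> s' < strip_height lm n \<Longrightarrow> \<bar>t' - t\<bar> < e \<Longrightarrow>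
      chart_offset lm (strip_chart lm n t s) (strip_chart lm n t' s') (pt (t' - t) (s' - s))"
    using strip_chart_local by metis
  moreover have "\<bar>t' - t\<bar> \<le> norm (pt (t' - t) (s' - s))" for t' s'
    using component_le_norm_cart[of "pt (t' - t) (s' - s)" 1] by simp
  ultimately show "\<exists>e>0. \<forall>t' s'. 0 < s' \<and> s' < strip_height lm n \<and> norm (pt (t' - t) (s' - s)) < e \<longrightarrow>
      chart_offset lm (strip_chart lm n t s) (strip_chart lm n t' s') (pt (t' - t) (s' - s))"
    by (meson le_less_trans)
qed (use strip_chart_shift[of n _ 1] strip_chart_inj strip_width_pos strip_height_pos
      hstrip_eq_image strip_chart_in_hstrip[unfolded hstrip_iff] in \<open>auto simp: hstrip_iff\<close>)

end

section \<open>Horizontal cylinders\<close>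

lemma locally_constant_real:
  fixes f :: "real \<Rightarrow> 'b"
  assumes "connected A" "a \<in> A" "b \<in> A"
    and "\<forall>x\<in>A. \<exists>e>0. \<forall>y\<in>A. \<bar>y - x\<bar> < e \<longrightarrow> f y = f x"
  shows "f a = f b"
proof (rule connected_local_const[OF assms(1-3)])
  show "\<forall>a\<in>A. \<forall>\<^sub>F b in at a within A. f a = f b"
    using assms(4) unfolding eventually_at by (metis dist_real_def)
qed

lemma hcyl_paramD:
  assumes "hcyl_param lm \<phi> w h C"
  shows "0 < w" "0 < h" "C = {\<phi> t s | t s. 0 < s \<and> s < h}" "C \<subseteq> ladder_X lm"
    and "\<And>t s. 0 < s \<Longrightarrow> s < h \<Longrightarrow> \<phi> (t + w) s = \<phi> t s"
    and "\<And>t s. 0 < s \<Longrightarrow> s < h \<Longrightarrow> \<exists>e>0. \<forall>t' s'. 0 < s' \<and> s' < h \<and>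
      norm (pt (t' - t) (s' - s)) < e \<longrightarrow> chart_offset lm (\<phi> t s) (\<phi> t' s') (pt (t' - t) (s' - s))"
  using assms unfolding hcyl_param_def by (elim conjE; simp)+

lemma hcyl_param_horizontal_const:
  assumes cyl: "hcyl_param lm \<phi> w h C" and s: "0 < s" "s < h"
    and step: "\<And>x y r r'. r \<in> reps lm (\<phi> x s) \<Longrightarrow> r' \<in> reps lm (\<phi> y s) \<Longrightarrow> r' - r = pt (y - x) 0
      \<Longrightarrow> f y = f x"
  shows "f a = f b"
proof (rule locally_constant_real[where A = UNIV])
  show "\<forall>x\<in>UNIV. \<exists>e>0. \<forall>y\<in>UNIV. \<bar>y - x\<bar> < e \<longrightarrow> f y = f x"
  proof
    fix x
    obtain e where "e > 0" and e: "\<forall>t' s'. 0 < s' \<and> s' < h \<and> norm (pt (t' - x) (s' - s)) < e \<longrightarrow>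
        chart_offset lm (\<phi> x s) (\<phi> t' s') (pt (t' - x) (s' - s))"
      using hcyl_paramD(6)[OF cyl s] by blast
    have "f y = f x" if "\<bar>y - x\<bar> < e" for y
      using e[rule_format, where t'=y and s'=s] that s step by (auto simp: norm_pt_0_right)
    then show "\<exists>e>0. \<forall>y\<in>UNIV. \<bar>y - x\<bar> < e \<longrightarrow> f y = f x" using \<open>e > 0\<close> by blast
  qed
qed auto

lemma hcyl_param_vertical_const:
  assumes cyl: "hcyl_param lm \<phi> w h C" and s: "0 < s" "s < h" "0 < s'" "s' < h"
    and step: "\<And>x y r r'. x \<in> {0<..<h} \<Longrightarrow> y \<in> {0<..<h} \<Longrightarrow> r \<in> reps lm (\<phi> 0 x) \<Longrightarrow>
      r' \<in> reps lm (\<phi> 0 y) \<Longrightarrow> r' - r = pt 0 (y - x) \<Longrightarrow> f y = f x"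
  shows "f s = f s'"
proof (rule locally_constant_real[where A = "{0<..<h}"])
  show "\<forall>x\<in>{0<..<h}. \<exists>e>0. \<forall>y\<in>{0<..<h}. \<bar>y - x\<bar> < e \<longrightarrow> f y = f x"
  proof
    fix x assume x: "x \<in> {0<..<h}"
    then obtain e where "e > 0" and e: "\<forall>t' s'. 0 < s' \<and> s' < h \<and> norm (pt (t' - 0) (s' - x)) < e
        \<longrightarrow> chart_offset lm (\<phi> 0 x) (\<phi> t' s') (pt (t' - 0) (s' - x))"
      using hcyl_paramD(6)[OF cyl, of x 0] by auto
    have "f y = f x" if "y \<in> {0<..<h}" "\<bar>y - x\<bar> < e" for y
      using e[rule_format, where t'=0 and s'=y] that x step by (auto simp: norm_pt_0_left)
    then show "\<exists>e>0. \<forall>y\<in>{0<..<h}. \<bar>y - x\<bar> < e \<longrightarrow> f y = f x" using \<open>e > 0\<close> by blast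
  qed
qed (use s in auto)

context ladder begin

text \<open>A horizontal cylinder cannot run along a vertex level: on such a level every point has a
  single abscissa, so the chart would be a translation of the whole real line, contradicting
  its periodicity.\<close>
lemma hcyl_param_not_vertex_level:
  assumes cyl: "hcyl_param lm \<phi> w h C" and s: "0 < s" "s < h"
  shows "\<not> vertex_level lm ((\<phi> t s)$2)"
proof
  assume level: "vertex_level lm ((\<phi> t s)$2)"
  have "vertex_level lm ((\<phi> t' s)$2) = vertex_level lm ((\<phi> t s)$2)" for t'
  proof (rule hcyl_param_horizontal_const[OF cyl s, where f = "\<lambda>t. vertex_level lm ((\<phi> t s)$2)"])
    fix x y r r' assume r: "r \<in> reps lm (\<phi> x s)" "r' \<in> reps lm (\<phi> y s)" "r' - r = pt (y - x) 0"
    then have "r'$2 = r$2" using diff_eq_ptD(2)[OF r(3)] by simp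
    then show "vertex_level lm ((\<phi> y s)$2) = vertex_level lm ((\<phi> x s)$2)"
      using reps_vertex_level_iff[OF r(1)] reps_vertex_level_iff[OF r(2)] by simp
  qed
  then have all_level: "vertex_level lm ((\<phi> t' s)$2)" for t'
    using level by blast
  have "(\<phi> (t + w) s)$1 - (t + w) = (\<phi> t s)$1 - t"
  proof (rule hcyl_param_horizontal_const[OF cyl s, where f = "\<lambda>t. (\<phi> t s)$1 - t"])
    fix x y r r' assume r: "r \<in> reps lm (\<phi> x s)" "r' \<in> reps lm (\<phi> y s)" "r' - r = pt (y - x) 0"
    then have "r$1 = (\<phi> x s)$1" "r'$1 = (\<phi> y s)$1" using reps_vertex_level(1) all_level by blast+
    then show "(\<phi> y s)$1 - y = (\<phi> x s)$1 - x" using diff_eq_ptD(1)[OF r(3)] by simp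
  qed
  then show False using hcyl_paramD(1,5)[OF cyl] s by simp
qed

lemma hcyl_param_height:
  assumes cyl: "hcyl_param lm \<phi> w h C"
  obtains c where "\<And>t s. 0 < s \<Longrightarrow> s < h \<Longrightarrow> (\<phi> t s)$2 = c + s"
proof -
  have same_level: "r$2 = (\<phi> t s)$2" if "r \<in> reps lm (\<phi> t s)" "0 < s" "s < h" for r t s
    using reps_nth2_eq hcyl_param_not_vertex_level[OF cyl] that by blast
  have horizontal: "(\<phi> t s)$2 = (\<phi> 0 s)$2" if s: "0 < s" "s < h" for t s
  proof (rule hcyl_param_horizontal_const[OF cyl s, where f = "\<lambda>t. (\<phi> t s)$2"])
    fix x y r r' assume r: "r \<in> reps lm (\<phi> x s)" "r' \<in> reps lm (\<phi> y s)" "r' - r = pt (y - x) 0"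
    then have "r'$2 = r$2" using diff_eq_ptD(2)[OF r(3)] by simp
    then show "(\<phi> y s)$2 = (\<phi> x s)$2" using same_level[OF r(1) s] same_level[OF r(2) s] by simp
  qed
  have vertical: "(\<phi> 0 s)$2 - s = (\<phi> 0 (h/2))$2 - h/2" if "0 < s" "s < h" for s
  proof (rule hcyl_param_vertical_const[OF cyl that, where f = "\<lambda>s. (\<phi> 0 s)$2 - s"])
    fix x y r r' assume xy: "x \<in> {0<..<h}" "y \<in> {0<..<h}"
      and r: "r \<in> reps lm (\<phi> 0 x)" "r' \<in> reps lm (\<phi> 0 y)" "r' - r = pt 0 (y - x)"
    have "r'$2 = r$2 + (y - x)" using diff_eq_ptD(2)[OF r(3)] .
    then show "(\<phi> 0 y)$2 - y = (\<phi> 0 x)$2 - x" using same_level r xy by auto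
  qed (use hcyl_paramD(2)[OF cyl] in auto)
  show ?thesis
  proof (rule that)
    fix t s assume "0 < s" "s < h"
    then show "(\<phi> t s)$2 = (\<phi> 0 (h/2))$2 - h/2 + s"
      using horizontal[of s t] vertical[of s] by simp
  qed
qed

lemma hcyl_param_subset_hstrip:
  assumes cyl: "hcyl_param lm \<phi> w h C"
  obtains n where "C \<subseteq> hstrip lm n"
proof -
  obtain c where height: "\<And>t s. 0 < s \<Longrightarrow> s < h \<Longrightarrow> (\<phi> t s)$2 = c + s"
    using hcyl_param_height[OF cyl] by blast
  have h2: "0 < h/2" "h/2 < h" using hcyl_paramD(2)[OF cyl] by auto
  have inX: "\<phi> t s \<in> ladder_X lm" if "0 < s" "s < h" for t s
    using hcyl_paramD(3,4)[OF cyl] that by blast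
  obtain n where "S (int n - 1) < (\<phi> 0 (h/2))$2" "(\<phi> 0 (h/2))$2 < S (int n)"
    using ladder_X_in_open_strip[OF inX[OF h2] hcyl_param_not_vertex_level[OF cyl h2]] by blast
  then have n: "S (int n - 1) < c + h/2" "c + h/2 < S (int n)" using height[OF h2] by auto
  text \<open>Neither bounding level of the strip is met by the cylinder, hence all of it lies inside.\<close>
  have not_level: "c + s \<noteq> S j" if "0 < s" "s < h" for s j
    using hcyl_param_not_vertex_level[OF cyl that, of 0] height[OF that] vertex_level_sseq[of j]
    by auto
  have "\<phi> t s \<in> hstrip lm n" if s: "0 < s" "s < h" for t s
  proof -
    have "c + s < S (int n)"
    proof (rule ccontr)
      assume "\<not> c + s < S (int n)"
      then have "0 < S (int n) - c" "S (int n) - c < h" using n s by linarith+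
      then show False using not_level[of "S (int n) - c" "int n"] by simp
    qed
    moreover have "S (int n - 1) < c + s"
    proof (rule ccontr)
      assume "\<not> S (int n - 1) < c + s"
      then have "0 < S (int n - 1) - c" "S (int n - 1) - c < h" using n s by linarith+
      then show False using not_level[of "S (int n - 1) - c" "int n - 1"] by simp
    qed
    ultimately show ?thesis using inX[OF s] height[OF s] by (simp add: hstrip_iff)
  qed
  then show ?thesis using that hcyl_paramD(3)[OF cyl] by blast
qed

lemma hstrip_disjoint:
  assumes "n \<noteq> m" shows "hstrip lm n \<inter> hstrip lm m = {}"
proof -
  have "int n - 1 = int m - 1" if "p \<in> hstrip lm n" "p \<in> hstrip lm m" for p
    using that by (intro sseq_strip_unique[of _ _ "p$2"]) (auto simp: hstrip_iff)
  then show ?thesis using assms by auto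
qed

lemma max_hcyl_iff: "max_hcyl lm C \<longleftrightarrow> (\<exists>n. C = hstrip lm n)"
proof
  assume m: "max_hcyl lm C"
  then obtain \<phi> w h where "hcyl_param lm \<phi> w h C" unfolding max_hcyl_def is_hcyl_def by blast
  then obtain n where "C \<subseteq> hstrip lm n" using hcyl_param_subset_hstrip by blast
  moreover have "is_hcyl lm (hstrip lm n)" unfolding is_hcyl_def using hcyl_param_hstrip by blast
  ultimately show "\<exists>n. C = hstrip lm n" using m unfolding max_hcyl_def by blast
next
  assume "\<exists>n. C = hstrip lm n"
  then obtain n where C: "C = hstrip lm n" by blast
  have "C' = C" if "is_hcyl lm C'" and "C \<subseteq> C'" for C'
  proof -
    obtain \<phi> w h where "hcyl_param lm \<phi> w h C'" using \<open>is_hcyl lm C'\<close> unfolding is_hcyl_def by blast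
    then obtain m where m: "C' \<subseteq> hstrip lm m" by (rule hcyl_param_subset_hstrip)
    have "strip_chart lm n 0 (strip_height lm n / 2) \<in> hstrip lm n"
      using strip_height_pos[of n] by (intro strip_chart_in_hstrip) auto
    then have "n = m" using hstrip_disjoint[of n m] m \<open>C \<subseteq> C'\<close> C by auto
    then show ?thesis using m \<open>C \<subseteq> C'\<close> C by blast
  qed
  moreover have "is_hcyl lm C" unfolding is_hcyl_def C using hcyl_param_hstrip by blast
  ultimately show "max_hcyl lm C" unfolding max_hcyl_def by blast
qed


lemma max_hcyl_disjoint:
  assumes "max_hcyl lm C" "max_hcyl lm C'" "C \<noteq> C'"
  shows "C \<inter> C' = {}"
proof -
  obtain n m where "C = hstrip lm n" "C' = hstrip lm m"
    using assms(1,2) unfolding max_hcyl_iff by blast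
  then show ?thesis using hstrip_disjoint[of n m] assms(3) by auto
qed

lemma max_hcyl_set_eq: "{C. max_hcyl lm C} = range (hstrip lm)"
  unfolding max_hcyl_iff by blast
end

section \<open>The topology of X_lambda\<close>

lemma finite_common_radius:
  assumes "finite R" "\<forall>r\<in>R. \<exists>e>0. P r (e::real)"
    and mono: "\<And>r e e'. P r e \<Longrightarrow> 0 < e' \<Longrightarrow> e' \<le> e \<Longrightarrow> P r e'"
  shows "\<exists>e>0. \<forall>r\<in>R. P r e"
  using assms(1,2)
proof (induction R rule: finite_induct)
  case (insert x F)
  then obtain e1 where e1: "e1 > 0" "\<forall>r\<in>F. P r e1" by auto
  obtain e2 where e2: "e2 > 0" "P x e2" using insert.prems by auto
  show ?case
    using e1 e2 mono[of _ e1 "min e1 e2"] mono[of x e2 "min e1 e2"]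
    by (intro exI[of _ "min e1 e2"]) auto
qed (auto intro: exI[of _ 1])

definition ladder_nhd :: "real \<Rightarrow> real^2 \<Rightarrow> real \<Rightarrow> (real^2) set" where
  "ladder_nhd lm r e = {y \<in> ladder_X lm. \<exists>d\<in>reps lm y. norm (d - r) < e}"

lemma ladder_nhd_mono: "e' \<le> e \<Longrightarrow> ladder_nhd lm r e' \<subseteq> ladder_nhd lm r e"
  unfolding ladder_nhd_def by force

lemma ladder_open_iff:
  "ladder_open lm U \<longleftrightarrow> U \<subseteq> ladder_X lm \<and> (\<forall>x\<in>U. \<forall>d\<in>reps lm x. \<exists>e>0. ladder_nhd lm d e \<subseteq> U)"
  unfolding ladder_open_def ladder_nhd_def by (simp add: subset_iff) blast

lemma openin_ladder_top: "openin (ladder_top lm) = ladder_open lm"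
  unfolding ladder_top_def by (rule topology_inverse'[OF istopology_ladder_open])

lemma topspace_ladder_top: "topspace (ladder_top lm) = ladder_X lm"
proof -
  have "ladder_open lm (ladder_X lm)" unfolding ladder_open_def using zero_less_one by blast
  moreover have "U \<subseteq> ladder_X lm" if "ladder_open lm U" for U
    using that unfolding ladder_open_def by blast
  ultimately show ?thesis unfolding topspace_def openin_ladder_top by blast
qed

context ladder begin

lemma glued_unique: assumes "glued lm p q" "glued lm p q'" shows "q = q'"
  using assms(1)
proof (cases rule: glued_cases)
  case (1 n)
  show ?thesis using assms(2)
  proof (cases rule: glued_cases)
    case (1 n')
    have "int n - 1 = int n' - 1"
      using sseq_strip_unique[of "int n - 1" "int n' - 1" "p$1"] \<open>p \<in> hedge lm n\<close> 1
      by (simp add: hedge_iff)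
    then show ?thesis using 1 \<open>q = _\<close> by simp
  qed (use \<open>p \<in> hedge lm n\<close> hedge_vertex_level vedge_not_vertex_level in blast)
next
  case (2 n)
  show ?thesis using assms(2)
  proof (cases rule: glued_cases)
    case (2 n')
    have "S (int n) = S (int n')" using 2 \<open>p \<in> vedge lm n\<close> by (simp add: vedge_iff)
    then have "n = n'" using sseq_inj[of "int n" "int n'"] by simp
    then show ?thesis using 2 \<open>q = _\<close> by simp
  qed (use \<open>p \<in> vedge lm n\<close> hedge_vertex_level vedge_not_vertex_level in blast)
qed

lemma finite_reps: "finite (reps lm p)"
proof -
  have "{q. glued lm p q} \<subseteq> {q}" if "glued lm p q" for q
    using that glued_unique by blast
  then have "finite {q. glued lm p q}"
    by (cases "\<exists>q. glued lm p q") (auto intro: finite_subset)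
  then show ?thesis unfolding reps_def by simp
qed

text \<open>The finiteness of reps gives one radius that works at all representatives of a point.\<close>
lemma ladder_open_common_radius:
  assumes "ladder_open lm U" "x \<in> U"
  obtains e where "e > 0" "\<And>r. r \<in> reps lm x \<Longrightarrow> ladder_nhd lm r e \<subseteq> U"
proof -
  have "\<forall>r\<in>reps lm x. \<exists>e>0. ladder_nhd lm r e \<subseteq> U"
    using assms unfolding ladder_open_iff by blast
  then have "\<exists>e>0. \<forall>r\<in>reps lm x. ladder_nhd lm r e \<subseteq> U"
    by (rule finite_common_radius[OF finite_reps]) (use ladder_nhd_mono in blast)
  then show ?thesis using that by blast
qed

lemma continuous_map_locally_affine:
  assumes la: "locally_affine lm A f" and fX: "\<And>x. x \<in> ladder_X lm \<Longrightarrow> f x \<in> ladder_X lm"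
    and B: "\<And>v. norm (A *v v) \<le> B * norm v" "0 < B"
  shows "continuous_map (ladder_top lm) (ladder_top lm) f"
  unfolding continuous_map_def topspace_ladder_top openin_ladder_top
proof (intro conjI allI impI)
  show "f \<in> ladder_X lm \<rightarrow> ladder_X lm" using fX by blast
  fix U assume U: "ladder_open lm U"
  show "ladder_open lm {x \<in> ladder_X lm. f x \<in> U}"
    unfolding ladder_open_iff
  proof (intro conjI ballI)
    fix x d assume x: "x \<in> {x \<in> ladder_X lm. f x \<in> U}" and d: "d \<in> reps lm x"
    obtain e1 where "e1 > 0" and e1: "\<forall>y\<in>ladder_X lm. \<forall>d'\<in>reps lm y.
        norm (d' - d) < e1 \<longrightarrow> chart_offset lm (f x) (f y) (A *v (d' - d))"
      using la x d unfolding locally_affine_def by blast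
    obtain e2 where "e2 > 0" and e2: "\<And>r. r \<in> reps lm (f x) \<Longrightarrow> ladder_nhd lm r e2 \<subseteq> U"
      using ladder_open_common_radius[OF U] x by blast
    have "ladder_nhd lm d (min e1 (e2 / B)) \<subseteq> {x \<in> ladder_X lm. f x \<in> U}"
    proof
      fix y assume "y \<in> ladder_nhd lm d (min e1 (e2 / B))"
      then obtain d' where y: "y \<in> ladder_X lm" "d' \<in> reps lm y" "norm (d' - d) < min e1 (e2 / B)"
        unfolding ladder_nhd_def by blast
      have "norm (d' - d) < e1" using y(3) by simp
      then obtain r r' where r: "r \<in> reps lm (f x)" "r' \<in> reps lm (f y)" "r' - r = A *v (d' - d)"
        using e1 y(1,2) by blast
      have "norm (r' - r) \<le> B * norm (d' - d)" using r(3) B by simp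
      also have "\<dots> < B * (e2 / B)" using y(3) B by (intro mult_strict_left_mono) auto
      finally have "f y \<in> ladder_nhd lm r e2"
        using B fX[OF y(1)] r(2) unfolding ladder_nhd_def by auto
      then show "y \<in> {x \<in> ladder_X lm. f x \<in> U}" using e2[OF r(1)] y(1) by blast
    qed
    then show "\<exists>e>0. ladder_nhd lm d e \<subseteq> {x \<in> ladder_X lm. f x \<in> U}"
      using \<open>e1 > 0\<close> \<open>e2 > 0\<close> B by (intro exI[of _ "min e1 (e2 / B)"]) auto
  qed blast
qed

lemma vertex_level_strip_bottom:
  assumes "x \<in> ladder_X lm" "vertex_level lm (x$2)"
  obtains k :: nat where "x$2 = S (int k - 1)" "S (int k - 2) < x$1" "x$1 < S (int k + 1)"
  using ladder_X_cases[OF assms(1)]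
proof (elim disjE exE)
  assume "x \<in> ladder_region lm"
  then show thesis
  proof (cases rule: region_cases)
    case (level n)
    moreover have "S (int n + 1) \<le> S (int n + 2)" by (rule sseq_mono) simp
    ultimately show thesis using that[of "n + 1"] by (simp add: add.commute)
  qed (use strip_not_vertex_level assms(2) in blast)
next
  fix m assume m: "x \<in> hedge lm m"
  show thesis
  proof (cases m)
    case 0
    have "S 0 \<le> S 1" by (rule sseq_mono) simp
    then show thesis using m 0 that[of 0] by (simp add: hedge_iff sseq_neg)
  next
    case (Suc k)
    have "S (int k - 2) \<le> S (int k)" by (rule sseq_mono) simp
    then show thesis using m Suc that[of k] by (simp add: hedge_iff add.commute)
  qed
qed (use vedge_not_vertex_level assms(2) in blast)

lemma strip_bottom_in_closure:
  assumes x: "x \<in> ladder_X lm"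
    and k: "x$2 = S (int k - 1)" "S (int k - 2) < x$1" "x$1 < S (int k + 1)"
  shows "x \<in> ladder_top lm closure_of (hstrip lm k)"
  unfolding closure_of_def topspace_ladder_top openin_ladder_top
proof (intro CollectI conjI allI impI)
  fix T assume T: "x \<in> T \<and> ladder_open lm T"
  then obtain e where "e > 0" and e: "ladder_nhd lm x e \<subseteq> T"
    using reps_self unfolding ladder_open_iff by blast
  define \<delta> where "\<delta> = min (e/2) (strip_height lm k / 2)"
  have \<delta>: "0 < \<delta>" "\<delta> < e" "\<delta> < strip_height lm k"
    using \<open>e > 0\<close> strip_height_pos[of k] by (auto simp: \<delta>_def)
  let ?y = "pt (x$1) (x$2 + \<delta>)"
  have "?y \<in> ladder_X lm"
    using k \<delta> by (intro ladder_X_regionI pt_in_region_strip) (auto simp: strip_height_def)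
  moreover have "?y - x = pt 0 \<delta>" by (rule vec2_eqI) simp_all
  ultimately have "?y \<in> hstrip lm k" "?y \<in> ladder_nhd lm x e"
    using k \<delta> norm_pt_0_left[of \<delta>] unfolding ladder_nhd_def
    by (auto simp: hstrip_iff strip_height_def intro!: bexI[OF _ reps_self])
  then show "\<exists>y\<in>hstrip lm k. y \<in> T" using e by blast
qed (use x in blast)

lemma ladder_X_subset_closure_hstrip:
  assumes x: "x \<in> ladder_X lm"
  obtains k where "x \<in> ladder_top lm closure_of (hstrip lm k)"
proof (cases "vertex_level lm (x$2)")
  case False
  then obtain n where "S (int n - 1) < x$2" "x$2 < S (int n)"
    using ladder_X_in_open_strip[OF x] by blast
  then have "x \<in> hstrip lm n" using x by (simp add: hstrip_iff)
  moreover have "hstrip lm n \<subseteq> topspace (ladder_top lm)"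
    by (auto simp: topspace_ladder_top hstrip_iff)
  ultimately show thesis using that closure_of_subset by blast
next
  case True
  then obtain k where "x$2 = S (int k - 1)" "S (int k - 2) < x$1" "x$1 < S (int k + 1)"
    using vertex_level_strip_bottom[OF x] by blast
  then show thesis using strip_bottom_in_closure[OF x] that by blast
qed

lemma closure_max_hcyl_cover:
  "\<Union>{ladder_top lm closure_of C | C. max_hcyl lm C} = ladder_X lm"
proof (intro equalityI subsetI)
  fix x assume "x \<in> \<Union>{ladder_top lm closure_of C | C. max_hcyl lm C}"
  then obtain C where "x \<in> ladder_top lm closure_of C" by blast
  then show "x \<in> ladder_X lm"
    using closure_of_subset_topspace[of "ladder_top lm" C] topspace_ladder_top by blast
next
  fix x assume "x \<in> ladder_X lm"
  then obtain k where "x \<in> ladder_top lm closure_of (hstrip lm k)"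
    by (rule ladder_X_subset_closure_hstrip)
  moreover have "max_hcyl lm (hstrip lm k)" using max_hcyl_iff by blast
  ultimately show "x \<in> \<Union>{ladder_top lm closure_of C | C. max_hcyl lm C}" by blast
qed

end

section \<open>The multitwist\<close>

definition multitwist :: "real \<Rightarrow> real \<Rightarrow> real^2 \<Rightarrow> real^2" where
  "multitwist lm c p = (if \<exists>n. p \<in> hstrip lm n then
     (let n = SOME n. p \<in> hstrip lm n; s = p$2 - sseq lm (int n - 1) in
       strip_chart lm n (p$1 - sseq lm (int n - 2) + c * s) s)
     else p)"

text \<open>The shear by c twists every strip an integral number of times, so that it glues continuously
  across the vertex levels.\<close>
definition shear_compatible :: "real \<Rightarrow> real \<Rightarrow> bool" where
  "shear_compatible lm c \<longleftrightarrow> (\<forall>n. \<exists>m::int. c * strip_height lm n = of_int m * strip_width lm n)"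

definition locally_affine_at :: "real \<Rightarrow> real^2^2 \<Rightarrow> (real^2 \<Rightarrow> real^2) \<Rightarrow> real^2 \<Rightarrow> real^2 \<Rightarrow> bool" where
  "locally_affine_at lm A f x d \<longleftrightarrow> (\<exists>e>0. \<forall>y\<in>ladder_X lm. \<forall>d'\<in>reps lm y.
     norm (d' - d) < e \<longrightarrow> chart_offset lm (f x) (f y) (A *v (d' - d)))"

lemma locally_affine_iff_at:
  "locally_affine lm A f \<longleftrightarrow> (\<forall>x\<in>ladder_X lm. \<forall>d\<in>reps lm x. locally_affine_at lm A f x d)"
  unfolding locally_affine_def locally_affine_at_def ..

lemma shear_compatible_uminus: "shear_compatible lm c \<Longrightarrow> shear_compatible lm (- c)"
  unfolding shear_compatible_def by (metis minus_mult_left of_int_minus)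

context ladder begin

lemma multitwist_hstrip:
  assumes "p \<in> hstrip lm n"
  shows "multitwist lm c p
    = strip_chart lm n (p$1 - S (int n - 2) + c * (p$2 - S (int n - 1))) (p$2 - S (int n - 1))"
proof -
  have "(SOME n. p \<in> hstrip lm n) = n"
    using assms hstrip_disjoint by (intro some_equality) auto
  then show ?thesis using assms unfolding multitwist_def by (auto simp: Let_def)
qed

lemma multitwist_outside: "(\<And>n. p \<notin> hstrip lm n) \<Longrightarrow> multitwist lm c p = p"
  unfolding multitwist_def by auto

lemma multitwist_strip_chart:
  assumes "0 < s" "s < strip_height lm n"
  shows "multitwist lm c (strip_chart lm n t s) = strip_chart lm n (t + c * s) s"
proof -
  have "multitwist lm c (strip_chart lm n t s)
      = strip_chart lm n (wrap (strip_width lm n) t + c * s) s"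
    using strip_chart_in_hstrip[OF assms, of t] by (simp add: multitwist_hstrip strip_chart_nth)
  then show ?thesis by (simp add: strip_chart_wrap_add)
qed

lemma multitwist_in_ladder_X: assumes "p \<in> ladder_X lm" shows "multitwist lm c p \<in> ladder_X lm"
proof (cases "\<exists>n. p \<in> hstrip lm n")
  case True
  then obtain n t s where "p = strip_chart lm n t s" "0 < s" "s < strip_height lm n"
    using hstrip_eq_image by blast
  then have "multitwist lm c p \<in> hstrip lm n"
    using multitwist_strip_chart strip_chart_in_hstrip by simp
  then show ?thesis by (simp add: hstrip_iff)
qed (use assms multitwist_outside in auto)

lemma multitwist_uminus_inverse:
  assumes "p \<in> ladder_X lm" shows "multitwist lm (- c) (multitwist lm c p) = p"
proof (cases "\<exists>n. p \<in> hstrip lm n")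
  case True
  then obtain n t s where "p = strip_chart lm n t s" "0 < s" "s < strip_height lm n"
    using hstrip_eq_image by blast
  then show ?thesis using multitwist_strip_chart by simp
qed (use multitwist_outside in auto)

lemma multitwist_eq_pt:
  assumes y: "y \<in> ladder_X lm" "d \<in> reps lm y" and lev: "S (int k - 1) < d$2" "d$2 < S (int k)"
    and u: "S (int k - 2) < u" "u \<le> S (int k + 1)"
      "u = d$1 + c * (d$2 - S (int k - 1)) + of_int m * strip_width lm k"
  shows "multitwist lm c y = pt u (d$2)"
proof -
  define \<sigma> where "\<sigma> = d$2 - S (int k - 1)"
  have \<sigma>: "0 < \<sigma>" "\<sigma> < strip_height lm k" using lev by (auto simp: \<sigma>_def strip_height_def)
  have "y = strip_chart lm k (d$1 - S (int k - 2)) \<sigma>"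
    using reps_in_strip[OF y lev] by (simp add: \<sigma>_def)
  then have "multitwist lm c y = strip_chart lm k (d$1 - S (int k - 2) + c * \<sigma>) \<sigma>"
    using multitwist_strip_chart[OF \<sigma>] by simp
  also have "\<dots> = strip_chart lm k (u - S (int k - 2) + of_int (- m) * strip_width lm k) \<sigma>"
    using u(3)
    by (intro arg_cong[where f = "\<lambda>t. strip_chart lm k t \<sigma>"]) (simp add: \<sigma>_def algebra_simps)
  also have "\<dots> = strip_chart lm k (u - S (int k - 2)) \<sigma>"
    by (rule strip_chart_shift)
  also have "\<dots> = pt u (d$2)"
    using strip_chart_self[OF u(1,2), of "d$2"] by (simp add: \<sigma>_def)
  finally show ?thesis .
qed

lemma reps_nth2_nonneg: assumes "z \<in> reps lm y" "y \<in> ladder_X lm" shows "0 \<le> z$2"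
  using reps_cases[OF assms(1)]
proof
  assume zy: "z = y"
  show ?thesis using ladder_X_cases[OF assms(2)]
  proof (elim disjE exE)
    assume "y \<in> ladder_region lm" then show ?thesis using zy by (simp add: ladder_region_def)
  next
    fix n assume "y \<in> hedge lm n" then show ?thesis using zy sseq_nonneg by (simp add: hedge_iff)
  next
    fix n assume "y \<in> vedge lm n"
    then show ?thesis using zy sseq_nonneg[of "int n - 2"] by (simp add: vedge_iff)
  qed
next
  assume "glued lm y z"
  then show ?thesis
  proof (cases rule: glued_cases)
    case (1 n) then show ?thesis using sseq_nonneg by (simp add: hedge_iff)
  next
    case (2 n) then show ?thesis using sseq_nonneg[of "int n - 2"] by (simp add: vedge_iff)
  qed
qed

lemma ladder_X_vertex_level_between:
  assumes y: "y \<in> ladder_X lm" and J: "-1 \<le> J" "y$2 = S J"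
  shows "(S (J - 1) < y$1 \<and> y$1 < S (J + 1)) \<or> (S (J + 1) < y$1 \<and> y$1 < S (J + 2))"
  using ladder_X_cases[OF y]
proof (elim disjE exE)
  assume "y \<in> ladder_region lm"
  then show ?thesis
  proof (cases rule: region_cases)
    case (strip n)
    have "vertex_level lm (y$2)" using J vertex_level_sseq by simp
    with strip_not_vertex_level[OF strip(1,2)] show ?thesis by contradiction
  next
    case (level n)
    then have "S (int n) = S J" using J(2) by simp
    then have "int n = J" using sseq_inj[of "int n" J] J(1) by simp
    then show ?thesis using level by auto
  qed
next
  fix m assume m: "y \<in> hedge lm m"
  show ?thesis
  proof (cases m)
    case 0
    then have "S J = S (-1)" using m J by (simp add: hedge_iff sseq_neg)
    then have "J = -1" using sseq_inj[of J "-1"] J by simp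
    then show ?thesis using m 0 by (simp add: hedge_iff sseq_neg)
  next
    case (Suc k)
    then have "S (int k - 1) = S J" using m J by (simp add: hedge_iff)
    then have "J = int k - 1" using sseq_inj[of "int k - 1" J] J by simp
    then show ?thesis using m Suc by (simp add: hedge_iff)
  qed
next
  fix m assume "y \<in> vedge lm m"
  then show ?thesis using vedge_not_vertex_level vertex_level_sseq[of J] J by metis
qed

lemma reps_vertex_level_between:
  assumes y: "y \<in> ladder_X lm" and d: "d \<in> reps lm y" and J: "-1 \<le> J" "d$2 = S J"
  shows "(S (J - 2) < d$1 \<and> d$1 < S (J - 1)) \<or> (S (J - 1) < d$1 \<and> d$1 < S (J + 1))
       \<or> (S (J + 1) < d$1 \<and> d$1 < S (J + 2))"
  using reps_cases[OF d]
proof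
  assume "glued lm y d"
  then show ?thesis
  proof (cases rule: glued_cases)
    case (1 n)
    then have "S (int n + 1) = S J" using J by (simp add: hedge_iff)
    then have "J = int n + 1" using sseq_inj[of "int n + 1" J] J by simp
    then show ?thesis using 1 by (simp add: hedge_iff)
  next
    case (2 n)
    then have "d$2 = y$2" by simp
    then show ?thesis using 2 vedge_not_vertex_level[of y n] vertex_level_sseq[of J] J by simp
  qed
qed (use ladder_X_vertex_level_between[OF y J(1)] J(2) in auto)

lemma reps_vertex_level_far:
  assumes x: "x \<in> ladder_X lm" and d: "d \<in> reps lm x" and J: "-1 \<le> J" "d$2 = S J"
  obtains \<delta> where "0 < \<delta>"
    and "\<And>a. a \<in> {S (J - 2), S (J - 1), S (J + 1), S (J + 2)} \<Longrightarrow> \<delta> \<le> \<bar>d$1 - a\<bar>"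
proof -
  define vs where "vs = {S (J - 2), S (J - 1), S (J + 1), S (J + 2)}"
  have "S (J - 2) \<le> S (J - 1)" "S (J - 1) < S (J + 1)" "S (J + 1) \<le> S (J + 2)"
    using sseq_mono[of "J - 1" J] sseq_strict_mono[of J "J + 1"] J by (auto intro: sseq_mono)
  then have "d$1 \<notin> vs" using reps_vertex_level_between[OF x d J] unfolding vs_def by auto
  then have "0 < Min ((\<lambda>a. \<bar>d$1 - a\<bar>) ` vs)" unfolding vs_def by simp
  moreover have "Min ((\<lambda>a. \<bar>d$1 - a\<bar>) ` vs) \<le> \<bar>d$1 - a\<bar>" if "a \<in> vs" for a
    using that by (intro Min_le) (auto simp: vs_def)
  ultimately show thesis using that unfolding vs_def by blast
qed

lemma locally_affine_at_multitwist_strip: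
  assumes x: "x \<in> ladder_X lm" and d: "d \<in> reps lm x" and level: "\<not> vertex_level lm (x$2)"
  shows "locally_affine_at lm (mat2 1 c 0 1) (multitwist lm c) x d"
proof -
  define B where "B = 2 + \<bar>c\<bar>"
  have "0 < B" by (simp add: B_def)
  obtain n where n: "S (int n - 1) < x$2" "x$2 < S (int n)"
    using ladder_X_in_open_strip[OF x level] by blast
  define \<sigma> where "\<sigma> = d$2 - S (int n - 1)"
  have d2: "d$2 = x$2" using reps_nth2_eq level d by blast
  then have \<sigma>: "0 < \<sigma>" "\<sigma> < strip_height lm n" using n by (auto simp: \<sigma>_def strip_height_def)
  define u where "u = d$1 - S (int n - 2) + c * \<sigma>"
  have "x = strip_chart lm n (d$1 - S (int n - 2)) \<sigma>"
    using reps_in_strip[OF x d] n d2 by (simp add: \<sigma>_def)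
  then have tx: "multitwist lm c x = strip_chart lm n u \<sigma>"
    using multitwist_strip_chart[OF \<sigma>] by (simp add: u_def)
  obtain e1 where "e1 > 0" and e1: "\<And>t' s'. 0 < s' \<Longrightarrow> s' < strip_height lm n \<Longrightarrow> \<bar>t' - u\<bar> < e1 \<Longrightarrow>
      chart_offset lm (strip_chart lm n u \<sigma>) (strip_chart lm n t' s') (pt (t' - u) (s' - \<sigma>))"
    using strip_chart_local[OF \<sigma>] by metis
  define e where "e = min (min \<sigma> (strip_height lm n - \<sigma>)) (e1 / B)"
  have "0 < e" using \<sigma> \<open>e1 > 0\<close> \<open>0 < B\<close> by (simp add: e_def)
  moreover have "chart_offset lm (multitwist lm c x) (multitwist lm c y) (mat2 1 c 0 1 *v (d' - d))"
    if y: "y \<in> ladder_X lm" "d' \<in> reps lm y" and close: "norm (d' - d) < e" for y d'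
  proof -
    define \<sigma>' where "\<sigma>' = d'$2 - S (int n - 1)"
    have "\<bar>d'$2 - d$2\<bar> < min \<sigma> (strip_height lm n - \<sigma>)"
      using component_le_norm_cart[of "d' - d" 2] close by (simp add: e_def)
    then have \<sigma>': "0 < \<sigma>'" "\<sigma>' < strip_height lm n" by (auto simp: \<sigma>'_def \<sigma>_def)
    then have lev: "S (int n - 1) < d'$2" "d'$2 < S (int n)" by (auto simp: \<sigma>'_def strip_height_def)
    define u' where "u' = d'$1 - S (int n - 2) + c * \<sigma>'"
    have "y = strip_chart lm n (d'$1 - S (int n - 2)) \<sigma>'"
      using reps_in_strip[OF y lev] by (simp add: \<sigma>'_def)
    then have ty: "multitwist lm c y = strip_chart lm n u' \<sigma>'"
      using multitwist_strip_chart[OF \<sigma>'] by (simp add: u'_def)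
    have uu: "u' - u = (d' - d)$1 + c * (d' - d)$2"
      by (simp add: u'_def u_def \<sigma>'_def \<sigma>_def algebra_simps)
    have "\<bar>u' - u\<bar> \<le> B * norm (d' - d)"
      using abs_shear_nth1_le[of "d' - d" c] uu by (simp add: B_def)
    also have "\<dots> < B * (e1 / B)"
      using close \<open>0 < B\<close> by (intro mult_strict_left_mono) (auto simp: e_def)
    finally have "\<bar>u' - u\<bar> < e1" using \<open>0 < B\<close> by simp
    then have "chart_offset lm (strip_chart lm n u \<sigma>) (strip_chart lm n u' \<sigma>')
        (pt (u' - u) (\<sigma>' - \<sigma>))"
      using e1 \<sigma>' by blast
    moreover have "pt (u' - u) (\<sigma>' - \<sigma>) = mat2 1 c 0 1 *v (d' - d)"
      using uu by (simp add: mat2_mult \<sigma>'_def \<sigma>_def)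
    ultimately show ?thesis using tx ty by simp
  qed
  ultimately show ?thesis unfolding locally_affine_at_def by blast
qed

lemma multitwist_near_vertex_level:
  fixes d :: "real^2"
  assumes compat: "shear_compatible lm c" and y: "y \<in> ladder_X lm" "d' \<in> reps lm y"
    and J: "-1 \<le> J" "d$2 = S J"
    and u: "u = d'$1 + c * (d'$2 - d$2)"
    and far: "\<And>a. a \<in> {S (J - 2), S (J - 1), S (J + 1), S (J + 2)} \<Longrightarrow>
      \<bar>d'$1 - d$1\<bar> < \<bar>d$1 - a\<bar> \<and> \<bar>u - d$1\<bar> < \<bar>d$1 - a\<bar>"
    and below: "d'$2 < S (J + 1)" and above: "0 \<le> J \<Longrightarrow> S (J - 1) < d'$2"
  shows "pt u (d'$2) \<in> reps lm (multitwist lm c y)"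
proof -
  have between: "a < u \<and> u < b"
    if "a \<le> d'$1" "d'$1 \<le> b" and "a \<in> {S (J - 2), S (J - 1), S (J + 1), S (J + 2)}"
      and "b \<in> {S (J - 2), S (J - 1), S (J + 1), S (J + 2)}" for a b
    using far[OF that(3)] far[OF that(4)] that(1,2) by (auto simp: abs_if split: if_splits)
  consider "d'$2 = d$2" | "d$2 < d'$2" | "d'$2 < d$2" by linarith
  then show ?thesis
  proof cases
    case 1
    then have "vertex_level lm (y$2)"
      using reps_vertex_level_iff[OF y(2)] J vertex_level_sseq by metis
    then have "multitwist lm c y = y"
      using strip_not_vertex_level by (intro multitwist_outside) (auto simp: hstrip_iff)
    moreover have "u = d'$1" using u 1 by simp
    ultimately show ?thesis using y(2) by (simp add: pt_eta)
  next
    case 2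
    define k where "k = nat (J + 1)"
    have k: "int k = J + 1" using J by (simp add: k_def)
    have lev: "S (int k - 1) < d'$2" "d'$2 < S (int k)" using 2 J below k by auto
    then have "S (J - 1) < u" "u < S (J + 2)"
      using reps_in_strip[OF y lev] k between[of "S (J - 1)" "S (J + 2)"]
      by (auto simp: add.commute)
    then have "multitwist lm c y = pt u (d'$2)"
      using k J u by (intro multitwist_eq_pt[OF y lev, where m = 0]) (auto simp: add.commute)
    then show ?thesis using reps_self by metis
  next
    case 3
    have "0 \<le> J"
      using 3 J reps_nth2_nonneg[OF y(2,1)] by (cases "J = -1") (auto simp: sseq_neg)
    define k where "k = nat J"
    have k: "int k = J" using \<open>0 \<le> J\<close> by (simp add: k_def)
    have lev: "S (int k - 1) < d'$2" "d'$2 < S (int k)" using 3 J above k \<open>0 \<le> J\<close> by auto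
    then have "S (J - 2) < u" "u < S (J + 1)"
      using reps_in_strip[OF y lev] k between[of "S (J - 2)" "S (J + 1)"] by auto
    obtain m where m: "c * strip_height lm k = of_int m * strip_width lm k"
      using compat unfolding shear_compatible_def by blast
    have "u = d'$1 + c * (d'$2 - S (int k - 1)) + of_int (- m) * strip_width lm k"
      using u J k m by (simp add: strip_height_def algebra_simps)
    then have "multitwist lm c y = pt u (d'$2)"
      using \<open>S (J - 2) < u\<close> \<open>u < S (J + 1)\<close> k
      by (intro multitwist_eq_pt[OF y lev, where m = "- m"]) auto
    then show ?thesis using reps_self by metis
  qed
qed

lemma locally_affine_at_multitwist_level:
  assumes compat: "shear_compatible lm c"
    and x: "x \<in> ladder_X lm" and d: "d \<in> reps lm x" and level: "vertex_level lm (x$2)"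
  shows "locally_affine_at lm (mat2 1 c 0 1) (multitwist lm c) x d"
proof -
  define B where "B = 2 + \<bar>c\<bar>"
  have "1 \<le> B" by (simp add: B_def)
  have tx: "multitwist lm c x = x"
    using level strip_not_vertex_level by (intro multitwist_outside) (auto simp: hstrip_iff)
  obtain J where J: "-1 \<le> J" "d$2 = S J"
    using reps_vertex_level(2)[OF level d] unfolding vertex_level_def by blast
  define vs where "vs = {S (J - 2), S (J - 1), S (J + 1), S (J + 2)}"
  obtain \<delta> where "0 < \<delta>" and \<delta>_le: "\<And>a. a \<in> vs \<Longrightarrow> \<delta> \<le> \<bar>d$1 - a\<bar>"
    using reps_vertex_level_far[OF x d J] unfolding vs_def by blast
  define elev where "elev = min (S (J + 1) - S J) (if 0 \<le> J then S J - S (J - 1) else 1)"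
  have "0 < elev" using sseq_strict_mono[of J "J + 1"] sseq_strict_mono[of "J - 1" J] J
    by (simp add: elev_def)
  define e where "e = min (\<delta> / B) elev"
  have "0 < e" using \<open>0 < \<delta>\<close> \<open>0 < elev\<close> \<open>1 \<le> B\<close> by (simp add: e_def)
  moreover have "d + mat2 1 c 0 1 *v (d' - d) \<in> reps lm (multitwist lm c y)"
    if y: "y \<in> ladder_X lm" "d' \<in> reps lm y" and close: "norm (d' - d) < e" for y d'
  proof -
    define u where "u = d'$1 + c * (d'$2 - d$2)"
    have "B * norm (d' - d) < \<delta>"
      using close \<open>1 \<le> B\<close> by (simp add: e_def field_simps)
    moreover have "\<bar>d'$1 - d$1\<bar> \<le> B * norm (d' - d)"
      using component_le_norm_cart[of "d' - d" 1] \<open>1 \<le> B\<close> mult_right_mono[of 1 B "norm (d' - d)"]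
      by simp
    moreover have "\<bar>u - d$1\<bar> \<le> B * norm (d' - d)"
      using abs_shear_nth1_le[of "d' - d" c] by (simp add: u_def B_def algebra_simps)
    ultimately have "\<bar>d'$1 - d$1\<bar> < \<bar>d$1 - a\<bar> \<and> \<bar>u - d$1\<bar> < \<bar>d$1 - a\<bar>" if "a \<in> vs" for a
      using \<delta>_le[OF that] by linarith
    moreover have "\<bar>d'$2 - d$2\<bar> < elev"
      using component_le_norm_cart[of "d' - d" 2] close by (simp add: e_def)
    ultimately have "pt u (d'$2) \<in> reps lm (multitwist lm c y)"
      using J by (intro multitwist_near_vertex_level[OF compat y J u_def])
        (auto simp: vs_def elev_def split: if_splits)
    moreover have "d + mat2 1 c 0 1 *v (d' - d) = pt u (d'$2)"
      by (rule vec2_eqI) (simp_all add: mat2_mult u_def algebra_simps)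
    ultimately show ?thesis by simp
  qed
  ultimately show ?thesis unfolding locally_affine_at_def using d tx
    by (intro exI[of _ e]) (metis add_diff_cancel_left')
qed

lemma locally_affine_multitwist:
  "shear_compatible lm c \<Longrightarrow> locally_affine lm (mat2 1 c 0 1) (multitwist lm c)"
  unfolding locally_affine_iff_at
  using locally_affine_at_multitwist_strip locally_affine_at_multitwist_level by blast

lemma affine_homeo_multitwist:
  assumes "shear_compatible lm c"
  shows "affine_homeo lm (mat2 1 c 0 1) (multitwist lm c)"
proof -
  have cont: "continuous_map (ladder_top lm) (ladder_top lm) (multitwist lm c')"
    if "shear_compatible lm c'" for c'
    using continuous_map_locally_affine[OF locally_affine_multitwist[OF that]
        multitwist_in_ladder_X shear_norm_le[of c']] by simp
  have "homeomorphic_maps (ladder_top lm) (ladder_top lm) (multitwist lm c) (multitwist lm (- c))"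
    unfolding homeomorphic_maps_def topspace_ladder_top
    using cont[OF assms] cont[OF shear_compatible_uminus[OF assms]]
      multitwist_uminus_inverse multitwist_uminus_inverse[of _ "- c"] by auto
  then show ?thesis
    unfolding affine_homeo_def homeomorphic_map_maps
    using locally_affine_multitwist[OF assms] by blast
qed

lemma dehn_twist_power_multitwist:
  assumes "c * strip_height lm n = of_int m * strip_width lm n"
  shows "dehn_twist_power lm (multitwist lm c) m (hstrip lm n)
    (strip_width lm n) (strip_height lm n)"
  unfolding dehn_twist_power_def
proof (intro exI[of _ "strip_chart lm n"] conjI allI impI)
  fix t s assume "0 < s \<and> s < strip_height lm n"
  moreover have "c = of_int m * strip_width lm n / strip_height lm n"
    using assms strip_height_pos[of n] by (simp add: field_simps)
  ultimately show "multitwist lm c (strip_chart lm n t s)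
      = strip_chart lm n (t + of_int m * strip_width lm n * s / strip_height lm n) s"
    by (simp add: multitwist_strip_chart)
qed (rule hcyl_param_hstrip)

end

section \<open>The parameter lambda_{k,l}\<close>

lemma ladder_lambda_equation_iff:
  fixes k l :: int and x :: real
  assumes "0 < x"
  shows "real_of_int k * (x + 1) = real_of_int l * (inverse x + 1 + x) \<longleftrightarrow>
    of_int (k - l) * x\<^sup>2 + of_int (k - l) * x - of_int l = 0"
proof -
  have "real_of_int k * (x + 1) = real_of_int l * (inverse x + 1 + x) \<longleftrightarrow>
      x * (real_of_int k * (x + 1)) = x * (real_of_int l * (inverse x + 1 + x))"
    using assms by simp
  also have "x * (real_of_int k * (x + 1)) = of_int k * x\<^sup>2 + of_int k * x"
    by (simp add: algebra_simps power2_eq_square)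
  also have "x * (real_of_int l * (inverse x + 1 + x)) = of_int l + of_int l * x + of_int l * x\<^sup>2"
    using assms by (simp add: field_simps power2_eq_square)
  also have "(of_int k * x\<^sup>2 + of_int k * x = of_int l + of_int l * x + of_int l * x\<^sup>2) \<longleftrightarrow>
      of_int (k - l) * x\<^sup>2 + of_int (k - l) * x - of_int l = (0::real)"
    by (simp add: algebra_simps)
  finally show ?thesis .
qed

lemma ladder_lambda:
  fixes k l :: int
  assumes "0 < l" "l < k"
  defines "lm \<equiv> ladder_lambda k l"
  shows "0 < lm" and "real_of_int k * (lm + 1) = real_of_int l * (inverse lm + 1 + lm)"
proof -
  define a where "a = real_of_int (k - l)"
  define L where "L = real_of_int l"
  have "0 < a" "0 < L" using assms by (auto simp: a_def L_def)
  define x0 where "x0 = (sqrt (a\<^sup>2 + 4 * a * L) - a) / (2 * a)"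
  have "a < sqrt (a\<^sup>2 + 4 * a * L)"
    using \<open>0 < a\<close> \<open>0 < L\<close> real_sqrt_less_mono[of "a\<^sup>2" "a\<^sup>2 + 4 * a * L"] by simp
  then have "0 < x0" using \<open>0 < a\<close> by (simp add: x0_def)
  have "(a + 2 * a * x0)\<^sup>2 = a\<^sup>2 + 4 * a * L"
    using \<open>0 < a\<close> \<open>0 < L\<close> by (simp add: x0_def field_simps)
  then have "4 * a * (a * x0\<^sup>2 + a * x0 - L) = 0"
    by (simp add: power2_eq_square algebra_simps)
  then have root: "a * x0\<^sup>2 + a * x0 - L = 0"
    using \<open>0 < a\<close> by simp
  have x0: "0 < x0 \<and> real_of_int k * (x0 + 1) = real_of_int l * (inverse x0 + 1 + x0)"
    using \<open>0 < x0\<close> root ladder_lambda_equation_iff[of x0 k l] by (simp add: a_def L_def)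
  text \<open>The other root of the quadratic is -1 - x0 < 0.\<close>
  have "y = x0" if y: "0 < y \<and> real_of_int k * (y + 1) = real_of_int l * (inverse y + 1 + y)" for y
  proof -
    have "a * y\<^sup>2 + a * y - L = 0"
      using y ladder_lambda_equation_iff[of y k l] by (simp add: a_def L_def)
    then have "a * (y - x0) * (y + x0 + 1) = 0"
      using root by (simp add: algebra_simps power2_eq_square)
    then show ?thesis using \<open>0 < a\<close> y \<open>0 < x0\<close> by simp
  qed
  then have "lm = x0"
    unfolding lm_def ladder_lambda_def using x0 by (intro the_equality) blast+
  then show "0 < lm" and "real_of_int k * (lm + 1) = real_of_int l * (inverse lm + 1 + lm)"
    using x0 by simp_all
qed

context ladder begin

lemma strip_height_eq_power: "strip_height lm n = lm ^ n"
  using sseq_diff[of "int n"] by (simp add: strip_height_def)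

lemma strip_width_0: "strip_width lm 0 = 1 + lm"
  using sseq_diff[of 1] sseq_diff[of 0] by (simp add: strip_width_def sseq_neg)

lemma strip_width_eq_powers:
  assumes "1 \<le> n" shows "strip_width lm n = lm ^ (n - 1) + lm ^ n + lm ^ (n + 1)"
proof -
  have "S (int n + 1) - S (int n) = lm ^ (n + 1)"
    using sseq_diff[of "int n + 1"] by (simp add: nat_add_distrib)
  moreover have "S (int n) - S (int n - 1) = lm ^ n" using sseq_diff[of "int n"] by simp
  moreover have "S (int n - 1) - S (int n - 2) = lm ^ (n - 1)"
    using sseq_diff[of "int n - 1"] assms by (simp add: nat_diff_distrib)
  ultimately show ?thesis by (simp add: strip_width_def)
qed

text \<open>The defining equation of lambda_{k,l} says that the strips n \<ge> 1 all have modulus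
  l/(k (1 + lambda)), while the bottom strip has modulus 1/(1 + lambda).\<close>
lemma ladder_shear_ratio:
  assumes lm_eq: "real_of_int k * (lm + 1) = real_of_int l * (inverse lm + 1 + lm)" and "1 \<le> n"
  shows "real_of_int k * (1 + lm) * strip_height lm n = real_of_int l * strip_width lm n"
proof -
  obtain j where j: "n = Suc j" using \<open>1 \<le> n\<close> by (cases n) auto
  have "real_of_int k * (1 + lm) * strip_height lm n = real_of_int k * (1 + lm) * lm * lm ^ j"
    using j by (simp add: strip_height_eq_power)
  also have "\<dots> = real_of_int l * (1 + lm + lm\<^sup>2) * lm ^ j"
    using lm_eq lm_pos by (simp add: field_simps power2_eq_square)
  also have "\<dots> = real_of_int l * strip_width lm n"
    using j by (simp add: strip_width_eq_powers algebra_simps power2_eq_square)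
  finally show ?thesis .
qed

lemma shear_compatible_ladder:
  assumes "real_of_int k * (lm + 1) = real_of_int l * (inverse lm + 1 + lm)"
  shows "shear_compatible lm (real_of_int k * (1 + lm))"
  unfolding shear_compatible_def
proof
  fix n
  show "\<exists>m::int. real_of_int k * (1 + lm) * strip_height lm n = of_int m * strip_width lm n"
  proof (cases "n = 0")
    case True
    then show ?thesis by (intro exI[of _ k]) (simp add: strip_height_eq_power strip_width_0)
  qed (use ladder_shear_ratio[OF assms] in auto)
qed

end

theorem mainTheorem6:
  fixes k l :: int
  assumes "0 < l" and "l < k" and "coprime k l"
  defines "lm \<equiv> ladder_lambda k l"
  shows "(\<forall>C C'. max_hcyl lm C \<and> max_hcyl lm C' \<and> C \<noteq> C' \<longrightarrow> C \<inter> C' = {})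
    \<and> \<Union>{ladder_top lm closure_of C | C. max_hcyl lm C} = ladder_X lm
    \<and> {C. max_hcyl lm C} = range (hstrip lm)
    \<and> (mat2 1 (real_of_int k * (1 + lm)) 0 1 \<in> veech_group lm
        \<or> - mat2 1 (real_of_int k * (1 + lm)) 0 1 \<in> veech_group lm)
    \<and> (\<exists>f. affine_homeo lm (mat2 1 (real_of_int k * (1 + lm)) 0 1) f
         \<and> dehn_twist_power lm f k (hstrip lm 0) (1 + lm) 1
         \<and> (\<forall>n::nat. 1 \<le> n \<longrightarrow>
              dehn_twist_power lm f l (hstrip lm n)
                (lm ^ (n - 1) + lm ^ n + lm ^ (n + 1)) (lm ^ n)))"
proof -
  interpret ladder lm using ladder_lambda(1)[OF assms(1,2)] by unfold_locales (simp add: lm_def)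
  have lm_eq: "real_of_int k * (lm + 1) = real_of_int l * (inverse lm + 1 + lm)"
    using ladder_lambda(2)[OF assms(1,2)] by (simp add: lm_def)
  define c where "c = real_of_int k * (1 + lm)"
  have aff: "affine_homeo lm (mat2 1 c 0 1) (multitwist lm c)"
    unfolding c_def by (rule affine_homeo_multitwist[OF shear_compatible_ladder[OF lm_eq]])
  have twist0: "dehn_twist_power lm (multitwist lm c) k (hstrip lm 0) (1 + lm) 1"
    using dehn_twist_power_multitwist[of c 0 k]
    by (simp add: c_def strip_height_eq_power strip_width_0)
  have twist: "dehn_twist_power lm (multitwist lm c) l (hstrip lm n)
      (lm ^ (n - 1) + lm ^ n + lm ^ (n + 1)) (lm ^ n)" if "1 \<le> n" for n
    using dehn_twist_power_multitwist[of c n l] ladder_shear_ratio[OF lm_eq that]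
    by (simp add: c_def strip_height_eq_power strip_width_eq_powers[OF that])
  have "det (mat2 1 c 0 1) = 1" by (simp add: det_mat2)
  then have "mat2 1 c 0 1 \<in> veech_group lm"
    unfolding veech_group_def using aff by blast
  then show ?thesis unfolding c_def[symmetric]
    using max_hcyl_disjoint max_hcyl_set_eq closure_max_hcyl_cover aff twist0 twist by blast
qed

end
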